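(* Let $n\in\mathbb N$, let $p$ be a positive even integer, and let $\mathcal S\subseteq\mathbb S^n$. Let $A_{i_1,\dots,i_p}$, $(i_1,\dots,i_p)\in\{1,\dots,n\}^p$, be independent standard normal random variables and let $\mathbf g\in\mathbb R^n$ have independent standard normal entries. For $c_3>0$ define $$\xi_u^0(p;\mathcal S,n,c_3)=\frac{\sqrt p}{\sqrt n}\left(-\frac{c_3}{2}(p-1)+\frac{1}{c_3}\log\Big(\mathbb E\,e^{c_3\sqrt p\max_{\mathbf x\in\mathcal S}\mathbf g^T\mathbf x}\Big)\right),$$ $$\xi_l^0(p;\mathcal S,n,c_3)=\frac{\sqrt p}{\sqrt n}\,\frac{1}{c_3}\log\Big(\mathbb E\,e^{c_3\max_{\mathbf x\in\mathcal S}\sum_{i_1,\dots,i_p=1}^nA_{i_1,\dots,i_p}\prod_{k=1}^p\mathbf x_{i_k}}\Big).$$ Then $\xi_l^0(p;\mathcal S,n,c_3)\le\xi_u^0(p;\mathcal S,n,c_3)$ for every $c_3>0$.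
   Context: $\mathbb S^n=\{\mathbf x\in\mathbb R^n:\|\mathbf x\|_2=1\}$, and $\mathbf x_i$ denotes the $i$-th coordinate of $\mathbf x$. *)

theory Defs
  imports "HOL-Probability.Probability"
begin

definition std_normal :: "real measure" where
  "std_normal = density lborel std_normal_density"

text \<open>Upper quantity; here n = CARD('n), g has iid standard normal entries,
  and the maximum over S is taken as a supremum.\<close>
definition xi_u0 :: "nat \<Rightarrow> (real ^ 'n::finite) set \<Rightarrow> real \<Rightarrow> real" where
  "xi_u0 p S c3 =
     sqrt (real p) / sqrt (real CARD('n)) *
     ( - (c3 / 2) * (real p - 1)
       + (1 / c3) * ln (\<integral>g. exp (c3 * sqrt (real p) *
                          (SUP x\<in>S. (\<Sum>i\<in>UNIV. g i * x $ i)))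
                        \<partial>(PiM (UNIV :: 'n set) (\<lambda>_. std_normal))))"

text \<open>Lower quantity; the Gaussian tensor A is indexed by tuples
  (i_1,...,i_p), represented as extensional maps {..<p} \<rightarrow> 'n.\<close>
definition xi_l0 :: "nat \<Rightarrow> (real ^ 'n::finite) set \<Rightarrow> real \<Rightarrow> real" where
  "xi_l0 p S c3 =
     sqrt (real p) / sqrt (real CARD('n)) *
     ((1 / c3) * ln (\<integral>A. exp (c3 *
                          (SUP x\<in>S. (\<Sum>\<iota>\<in>PiE {..<p} (\<lambda>_. UNIV :: 'n set).
                                        A \<iota> * (\<Prod>k<p. x $ \<iota> k))))
                        \<partial>(PiM (PiE {..<p} (\<lambda>_. UNIV :: 'n set)) (\<lambda>_. std_normal))))"

end

theory Submission
  imports Defs "HOL-Real_Asymp.Real_Asymp"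
begin

text \<open>
  Put \<open>X x = sqrt (p - 1) * g\<^sub>0 + (\<Sum>\<iota>. A \<iota> * x\<^sub>\<iota>\<^sub>1 * \<dots> * x\<^sub>\<iota>\<^sub>p)\<close> and \<open>Y x = sqrt p * (g \<bullet> x)\<close> with all
  entries independent standard Gaussians. For unit vectors \<open>E[X x X y] = p - 1 + (x \<bullet> y)^p\<close> and
  \<open>E[Y x Y y] = p (x \<bullet> y)\<close>: the variances agree, and since \<open>p t \<le> p - 1 + t^p\<close> for even \<open>p\<close>
  (Bernoulli), \<open>Y\<close> is less correlated than \<open>X\<close>. Kahane's comparison inequality (interpolate
  \<open>cos \<theta> X + sin \<theta> Y\<close> and integrate by parts) gives \<open>E F(X) \<le> E F(Y)\<close> for the smooth maximum
  \<open>F z = (\<Sum>j. exp (\<beta> z\<^sub>j)) powr (c / \<beta>)\<close>, whose mixed second derivatives are nonpositive for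
  \<open>\<beta> \<ge> c\<close>; letting \<open>\<beta> \<rightarrow> \<infinity>\<close> yields \<open>E exp (c max\<^sub>j X x\<^sub>j) \<le> E exp (c max\<^sub>j Y x\<^sub>j)\<close> for finitely
  many points. The independent \<open>g\<^sub>0\<close> contributes the factor \<open>exp (c\<^sup>2 (p - 1) / 2)\<close>, a dense
  sequence in \<open>S\<close> and dominated convergence pass to the supremum, and taking logarithms gives
  the claim.
\<close>

lemma prob_space_std_normal: "prob_space std_normal"
  unfolding std_normal_def by (rule prob_space_normal_density) simp

lemma sets_std_normal [measurable_cong, simp]: "sets std_normal = sets borel"
  unfolding std_normal_def by simp

lemma space_std_normal [simp]: "space std_normal = UNIV"
  unfolding std_normal_def by simp

lemma integrable_std_normal_iff:
  assumes "f \<in> borel_measurable borel"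
  shows "integrable std_normal f \<longleftrightarrow> integrable lborel (\<lambda>y. std_normal_density y * f y)"
  unfolding std_normal_def by (subst integrable_density) (use assms in auto)

lemma integral_std_normal:
  assumes "f \<in> borel_measurable borel"
  shows "integral\<^sup>L std_normal f = (\<integral>y. std_normal_density y * f y \<partial>lborel)"
  unfolding std_normal_def by (subst integral_density) (use assms in auto)

lemma std_normal_density_mult_exp:
  "std_normal_density y * exp (t * y) = exp (t\<^sup>2 / 2) * normal_density t 1 y"
  unfolding normal_density_def by (simp add: exp_add[symmetric] power2_eq_square field_simps)

lemma std_normal_mgf: "(\<integral>y. exp (t * y) \<partial>std_normal) = exp (t\<^sup>2 / 2)"
  by (subst integral_std_normal) (simp_all add: std_normal_density_mult_exp)

lemma integrable_std_normal_exp_abs: "integrable std_normal (\<lambda>y. exp (L * \<bar>y\<bar>))"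
proof -
  let ?g = "\<lambda>y. exp (L\<^sup>2 / 2) * normal_density L 1 y + exp ((-L)\<^sup>2 / 2) * normal_density (-L) 1 y"
  have "integrable lborel (\<lambda>y. std_normal_density y * exp (L * \<bar>y\<bar>))"
  proof (rule Bochner_Integration.integrable_bound)
    show "integrable lborel ?g" by auto
    show "AE y in lborel. norm (std_normal_density y * exp (L * \<bar>y\<bar>)) \<le> norm (?g y)"
    proof (intro AE_I2)
      fix y :: real
      have "std_normal_density y * exp (L * \<bar>y\<bar>)
          \<le> std_normal_density y * exp (L * y) + std_normal_density y * exp ((-L) * y)"
        by (cases "y \<ge> 0") (auto simp: add_nonneg_nonneg)
      also have "\<dots> = ?g y"
        by (simp only: std_normal_density_mult_exp)
      finally show "norm (std_normal_density y * exp (L * \<bar>y\<bar>)) \<le> norm (?g y)"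
        by (simp add: add_nonneg_nonneg)
    qed
  qed measurable
  then show ?thesis by (subst integrable_std_normal_iff) auto
qed

lemma integrable_std_normal_exp_bound:
  assumes [measurable]: "f \<in> borel_measurable borel"
    and bound: "\<And>y. \<bar>f y\<bar> \<le> K * exp (L * \<bar>y\<bar>)"
  shows "integrable std_normal f"
proof (rule Bochner_Integration.integrable_bound)
  show "integrable std_normal (\<lambda>y. K * exp (L * \<bar>y\<bar>))"
    by (intro integrable_mult_right integrable_std_normal_exp_abs)
  show "AE y in std_normal. norm (f y) \<le> norm (K * exp (L * \<bar>y\<bar>))"
    using bound by (intro AE_I2) (metis abs_ge_zero abs_of_nonneg order.trans real_norm_def)
qed simp

lemma abs_le_exp_abs: "\<bar>y::real\<bar> \<le> exp \<bar>y\<bar>"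
  using exp_ge_add_one_self[of "\<bar>y\<bar>"] by linarith

lemma abs_mult_le_exp_bound:
  fixes x g K L s :: real
  assumes "\<bar>g\<bar> \<le> K * exp (L * s)" "\<bar>x\<bar> \<le> s" "0 \<le> K"
  shows "\<bar>x * g\<bar> \<le> K * exp ((L + 1) * s)"
proof -
  have "\<bar>x\<bar> \<le> exp s" using assms(2) abs_le_exp_abs[of s] by simp
  then have "\<bar>x * g\<bar> \<le> exp s * (K * exp (L * s))"
    unfolding abs_mult by (intro mult_mono assms(1)) auto
  also have "\<dots> = K * exp ((L + 1) * s)" by (simp add: exp_add[symmetric] algebra_simps)
  finally show ?thesis .
qed

abbreviation gauss :: "'w set \<Rightarrow> ('w \<Rightarrow> real) measure" where
  "gauss W \<equiv> PiM W (\<lambda>_. std_normal)"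

lemma product_prob_space_std_normal: "product_prob_space (\<lambda>_::'w. std_normal)"
  by (simp add: product_prob_space_def product_prob_space_axioms_def product_sigma_finite_def
      prob_space_std_normal prob_space_imp_sigma_finite)

lemma prob_space_gauss: "prob_space (gauss W)"
proof -
  interpret product_prob_space "\<lambda>_::'w. std_normal" by (rule product_prob_space_std_normal)
  show ?thesis by (rule prob_space_PiM) (simp add: prob_space_std_normal)
qed

lemma integrable_gauss_exp_sum_abs:
  assumes "finite W"
  shows "integrable (gauss W) (\<lambda>u. exp (L * (\<Sum>v\<in>W. \<bar>u v\<bar>)))"
proof -
  interpret product_prob_space "\<lambda>_::'w. std_normal" by (rule product_prob_space_std_normal)
  have "integrable (gauss W) (\<lambda>u. \<Prod>v\<in>W. exp (L * \<bar>u v\<bar>))"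
    by (rule product_integrable_prod) (use assms integrable_std_normal_exp_abs in auto)
  then show ?thesis
    using assms by (simp add: exp_sum sum_distrib_left)
qed

lemma integrable_gauss_exp_bound:
  assumes "finite W" and [measurable]: "h \<in> borel_measurable (gauss W)"
    and bound: "\<And>u. \<bar>h u\<bar> \<le> K * exp (L * (\<Sum>v\<in>W. \<bar>u v\<bar>))"
  shows "integrable (gauss W) h"
proof (rule Bochner_Integration.integrable_bound)
  show "integrable (gauss W) (\<lambda>u. K * exp (L * (\<Sum>v\<in>W. \<bar>u v\<bar>)))"
    using integrable_gauss_exp_sum_abs[OF assms(1)] by auto
  show "AE u in gauss W. norm (h u) \<le> norm (K * exp (L * (\<Sum>v\<in>W. \<bar>u v\<bar>)))"
    using bound by (intro AE_I2) (metis abs_ge_zero abs_of_nonneg order.trans real_norm_def)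
qed simp

section \<open>Gaussian integration by parts\<close>

lemma std_normal_density_has_derivative:
  "(std_normal_density has_real_derivative (- y * std_normal_density y)) (at y)"
  unfolding std_normal_density_def
  by (auto intro!: derivative_eq_intros simp: power2_eq_square field_simps)

lemma exp_abs_mult_std_normal_density_tendsto_0:
  "((\<lambda>y. exp (L * \<bar>y\<bar>) * std_normal_density y) \<longlongrightarrow> 0) at_top"
  "((\<lambda>y. exp (L * \<bar>y\<bar>) * std_normal_density y) \<longlongrightarrow> 0) at_bot"
proof -
  have eq: "exp (L * \<bar>y\<bar>) * std_normal_density y = exp (L * \<bar>y\<bar> - y\<^sup>2 / 2) / sqrt (2 * pi)" for y
  proof -
    have "exp (L * \<bar>y\<bar> - y\<^sup>2 / 2) = exp (L * \<bar>y\<bar>) * exp (- y\<^sup>2 / 2)"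
      by (simp add: exp_add[symmetric])
    then show ?thesis unfolding std_normal_density_def by simp
  qed
  have "((\<lambda>y. exp (L * y - y\<^sup>2 / 2) / sqrt (2 * pi)) \<longlongrightarrow> 0) at_top"
    by real_asymp
  then show "((\<lambda>y. exp (L * \<bar>y\<bar>) * std_normal_density y) \<longlongrightarrow> 0) at_top"
    unfolding eq by (rule Lim_transform_eventually) (auto intro: eventually_mono[OF eventually_ge_at_top[of 0]])
  have "((\<lambda>y. exp (- L * y - y\<^sup>2 / 2) / sqrt (2 * pi)) \<longlongrightarrow> 0) at_bot"
    by real_asymp
  then show "((\<lambda>y. exp (L * \<bar>y\<bar>) * std_normal_density y) \<longlongrightarrow> 0) at_bot"
    unfolding eq by (rule Lim_transform_eventually) (auto intro: eventually_mono[OF eventually_le_at_bot[of 0]])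
qed

lemma tendsto_mult_std_normal_density_0:
  assumes bound: "\<And>y. \<bar>g y\<bar> \<le> K * exp (L * \<bar>y\<bar>)"
  shows "((\<lambda>y. g y * std_normal_density y) \<longlongrightarrow> 0) at_top"
    and "((\<lambda>y. g y * std_normal_density y) \<longlongrightarrow> 0) at_bot"
proof -
  have le: "\<bar>g y * std_normal_density y\<bar> \<le> K * (exp (L * \<bar>y\<bar>) * std_normal_density y)" for y
    using mult_right_mono[OF bound normal_density_nonneg] by (simp add: abs_mult mult.assoc)
  show "((\<lambda>y. g y * std_normal_density y) \<longlongrightarrow> 0) at_top"
    and "((\<lambda>y. g y * std_normal_density y) \<longlongrightarrow> 0) at_bot"
    using exp_abs_mult_std_normal_density_tendsto_0[of L]
    by (auto intro!: Lim_null_comparison[OF always_eventually,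
          where g = "\<lambda>y. K * (exp (L * \<bar>y\<bar>) * std_normal_density y)"] tendsto_mult_right_zero
        simp: le)
qed

text \<open>Stein's identity \<open>E[Y g(Y)] = E[g'(Y)]\<close>: \<open>(g \<phi>)' = g' \<phi> - y g \<phi>\<close> integrates to zero
  because \<open>g \<phi>\<close> vanishes at \<open>\<plusminus>\<infinity>\<close>.\<close>
lemma std_normal_integration_by_parts:
  fixes g g' :: "real \<Rightarrow> real"
  assumes deriv: "\<And>y. (g has_real_derivative g' y) (at y)"
    and cont: "\<And>y. isCont g' y"
    and bound: "\<And>y. \<bar>g y\<bar> \<le> K * exp (L * \<bar>y\<bar>)"
    and bound': "\<And>y. \<bar>g' y\<bar> \<le> K' * exp (L' * \<bar>y\<bar>)"
  shows "(\<integral>y. y * g y \<partial>std_normal) = integral\<^sup>L std_normal g'"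
proof -
  let ?\<phi> = std_normal_density
  have K: "0 \<le> K" using bound[of 0] by simp
  have [measurable]: "g \<in> borel_measurable borel" "g' \<in> borel_measurable borel"
    using DERIV_isCont[OF deriv] cont
    by (auto intro!: borel_measurable_continuous_onI continuous_at_imp_continuous_on)
  have "integrable std_normal (\<lambda>y. y * g y)"
    using bound K
    by (intro integrable_std_normal_exp_bound[where K = K and L = "L + 1"] abs_mult_le_exp_bound) auto
  then have yg_integrable: "integrable lborel (\<lambda>y. ?\<phi> y * (y * g y))"
    by (subst (asm) integrable_std_normal_iff) auto
  have "integrable std_normal g'"
    by (rule integrable_std_normal_exp_bound[OF _ bound']) simp
  then have g'_integrable: "integrable lborel (\<lambda>y. ?\<phi> y * g' y)"
    by (subst (asm) integrable_std_normal_iff) auto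
  define F where "F y = g y * ?\<phi> y" for y
  define f where "f y = ?\<phi> y * g' y - ?\<phi> y * (y * g y)" for y
  have F_lim: "(F \<longlongrightarrow> 0) at_top" "(F \<longlongrightarrow> 0) at_bot"
    unfolding F_def by (rule tendsto_mult_std_normal_density_0[OF bound])+
  have "(LBINT y=-\<infinity>..\<infinity>. f y) = 0 - 0"
  proof (rule interval_integral_FTC_integrable[where F = F])
    show "set_integrable lborel (einterval (-\<infinity>) \<infinity>) f"
      using yg_integrable g'_integrable by (simp add: set_integrable_def einterval_eq_UNIV f_def)
    show "((F \<circ> real_of_ereal) \<longlongrightarrow> 0) (at_right (-\<infinity>))" "((F \<circ> real_of_ereal) \<longlongrightarrow> 0) (at_left \<infinity>)"
      unfolding at_right_MInf at_left_PInf tendsto_compose_filtermap using F_lim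
      by (simp_all add: comp_def filtermap_filtermap filtermap_ident)
    show "(F has_vector_derivative f y) (at y)" for y
      unfolding F_def f_def has_real_derivative_iff_has_vector_derivative[symmetric]
      by (auto intro!: derivative_eq_intros deriv std_normal_density_has_derivative
          simp: algebra_simps)
    show "isCont f y" for y
      unfolding f_def std_normal_density_def using deriv
      by (intro continuous_intros cont DERIV_isCont) auto
  qed auto
  then have "(\<integral>y. f y \<partial>lborel) = 0"
    by (simp add: interval_lebesgue_integral_def set_lebesgue_integral_def einterval_eq_UNIV)
  then show ?thesis
    using yg_integrable g'_integrable by (simp add: integral_std_normal f_def)
qed

lemma sum_abs_fun_upd:
  assumes "finite W" "w \<in> W"
  shows "(\<Sum>v\<in>W. \<bar>(u(w := y)) v\<bar>) = \<bar>y\<bar> + (\<Sum>v\<in>W - {w}. \<bar>u v\<bar>)"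
proof -
  have "(\<Sum>v\<in>W - {w}. \<bar>(u(w := y)) v\<bar>) = (\<Sum>v\<in>W - {w}. \<bar>u v\<bar>)"
    by (rule sum.cong) auto
  then show ?thesis
    using assms by (simp add: sum.remove[of W w])
qed

lemma gauss_integration_by_parts:
  fixes f f' :: "('w \<Rightarrow> real) \<Rightarrow> real"
  assumes W: "finite W" "w \<in> W"
    and deriv: "\<And>u y. ((\<lambda>y. f (u(w := y))) has_real_derivative f' (u(w := y))) (at y)"
    and cont: "\<And>u y. isCont (\<lambda>y. f' (u(w := y))) y"
    and [measurable]: "f \<in> borel_measurable (gauss W)" "f' \<in> borel_measurable (gauss W)"
    and bound: "\<And>u. \<bar>f u\<bar> \<le> K * exp (L * (\<Sum>v\<in>W. \<bar>u v\<bar>))"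
    and bound': "\<And>u. \<bar>f' u\<bar> \<le> K' * exp (L' * (\<Sum>v\<in>W. \<bar>u v\<bar>))"
  shows "(\<integral>u. u w * f u \<partial>gauss W) = integral\<^sup>L (gauss W) f'"
proof -
  interpret product_prob_space "\<lambda>_::'w. std_normal" by (rule product_prob_space_std_normal)
  have K: "0 \<le> K" using bound[of "\<lambda>_. 0"] by simp
  have "integrable (gauss W) (\<lambda>u. u w * f u)"
    using W K
    by (intro integrable_gauss_exp_bound[where K = K and L = "L + 1"] abs_mult_le_exp_bound
        bound member_le_sum) auto
  then have "(\<integral>u. u w * f u \<partial>gauss W)
      = (\<integral>x. (\<integral>y. (x(w := y)) w * f (x(w := y)) \<partial>std_normal) \<partial>gauss (W - {w}))"
    using W product_integral_insert[of "W - {w}" w "\<lambda>u. u w * f u"] by (simp add: insert_absorb)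
  also have "\<dots> = (\<integral>x. (\<integral>y. f' (x(w := y)) \<partial>std_normal) \<partial>gauss (W - {w}))"
  proof (rule Bochner_Integration.integral_cong[OF refl])
    fix x :: "'w \<Rightarrow> real"
    have "(\<integral>y. y * f (x(w := y)) \<partial>std_normal) = (\<integral>y. f' (x(w := y)) \<partial>std_normal)"
    proof (rule std_normal_integration_by_parts[OF deriv cont])
      show "\<bar>f (x(w := y))\<bar> \<le> K * exp (L * (\<Sum>v\<in>W - {w}. \<bar>x v\<bar>)) * exp (L * \<bar>y\<bar>)" for y
        using bound[of "x(w := y)"] unfolding sum_abs_fun_upd[OF W] by (simp add: algebra_simps exp_add)
      show "\<bar>f' (x(w := y))\<bar> \<le> K' * exp (L' * (\<Sum>v\<in>W - {w}. \<bar>x v\<bar>)) * exp (L' * \<bar>y\<bar>)" for y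
        using bound'[of "x(w := y)"] unfolding sum_abs_fun_upd[OF W] by (simp add: algebra_simps exp_add)
    qed
    then show "(\<integral>y. (x(w := y)) w * f (x(w := y)) \<partial>std_normal) = (\<integral>y. f' (x(w := y)) \<partial>std_normal)"
      by simp
  qed
  also have "\<dots> = integral\<^sup>L (gauss W) f'"
    using W integrable_gauss_exp_bound[OF W(1) _ bound'] product_integral_insert[of "W - {w}" w f']
    by (simp add: insert_absorb)
  finally show ?thesis .
qed

section \<open>A smooth maximum\<close>

definition exp_sum :: "'j set \<Rightarrow> real \<Rightarrow> ('j \<Rightarrow> real) \<Rightarrow> real" where
  "exp_sum J \<beta> z = (\<Sum>j\<in>J. exp (\<beta> * z j))"

definition softmax :: "'j set \<Rightarrow> real \<Rightarrow> ('j \<Rightarrow> real) \<Rightarrow> 'j \<Rightarrow> real" where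
  "softmax J \<beta> z k = exp (\<beta> * z k) / exp_sum J \<beta> z"

definition exp_sum_powr_grad :: "'j set \<Rightarrow> real \<Rightarrow> real \<Rightarrow> ('j \<Rightarrow> real) \<Rightarrow> 'j \<Rightarrow> real" where
  "exp_sum_powr_grad J \<beta> r z k = r * \<beta> * exp_sum J \<beta> z powr r * softmax J \<beta> z k"

definition exp_sum_powr_hess :: "'j set \<Rightarrow> real \<Rightarrow> real \<Rightarrow> ('j \<Rightarrow> real) \<Rightarrow> 'j \<Rightarrow> 'j \<Rightarrow> real" where
  "exp_sum_powr_hess J \<beta> r z j k =
     r * \<beta>\<^sup>2 * exp_sum J \<beta> z powr r * softmax J \<beta> z j
       * ((if j = k then 1 else 0) + (r - 1) * softmax J \<beta> z k)"

context
  fixes J :: "'j set"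
  assumes finite_J: "finite J" and J_nonempty: "J \<noteq> {}"
begin

lemma exp_sum_pos: "0 < exp_sum J \<beta> z"
  unfolding exp_sum_def using finite_J J_nonempty by (intro sum_pos) auto

lemma exp_le_exp_sum: "j \<in> J \<Longrightarrow> exp (\<beta> * z j) \<le> exp_sum J \<beta> z"
  unfolding exp_sum_def using finite_J by (intro member_le_sum) auto

lemma exp_sum_le_card_exp_Max:
  assumes "0 \<le> \<beta>"
  shows "exp_sum J \<beta> z \<le> card J * exp (\<beta> * Max (z ` J))"
proof -
  have "exp (\<beta> * z j) \<le> exp (\<beta> * Max (z ` J))" if "j \<in> J" for j
    using that finite_J assms by (auto intro: mult_left_mono)
  then show ?thesis
    using sum_mono[of J "\<lambda>j. exp (\<beta> * z j)" "\<lambda>_. exp (\<beta> * Max (z ` J))"]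
    by (simp add: exp_sum_def)
qed

lemma exp_sum_powr_eq: "exp_sum J \<beta> z powr r = exp (r * ln (exp_sum J \<beta> z))"
  using exp_sum_pos[of \<beta> z] by (simp add: powr_def)

lemma softmax_nonneg: "0 \<le> softmax J \<beta> z k"
  unfolding softmax_def using exp_sum_pos[of \<beta> z] by (intro divide_nonneg_pos) auto

lemma softmax_le_1: "k \<in> J \<Longrightarrow> softmax J \<beta> z k \<le> 1"
  unfolding softmax_def using exp_sum_pos exp_le_exp_sum by simp

lemma ln_exp_sum_has_derivative:
  assumes "\<And>k. k \<in> J \<Longrightarrow> ((\<lambda>y. z y k) has_real_derivative z' k) (at y0 within X)"
  shows "((\<lambda>y. ln (exp_sum J \<beta> (z y))) has_real_derivative
           \<beta> * (\<Sum>k\<in>J. softmax J \<beta> (z y0) k * z' k)) (at y0 within X)"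
proof -
  have "((\<lambda>y. exp_sum J \<beta> (z y)) has_real_derivative (\<Sum>k\<in>J. exp (\<beta> * z y0 k) * (\<beta> * z' k)))
      (at y0 within X)"
    unfolding exp_sum_def by (intro DERIV_sum) (auto intro!: derivative_eq_intros assms)
  then show ?thesis
    using exp_sum_pos
    by (auto intro!: derivative_eq_intros
        simp: softmax_def sum_distrib_left sum_divide_distrib mult_ac)
qed

lemma exp_sum_powr_has_derivative:
  assumes "\<And>k. k \<in> J \<Longrightarrow> ((\<lambda>y. z y k) has_real_derivative z' k) (at y0 within X)"
  shows "((\<lambda>y. exp_sum J \<beta> (z y) powr r) has_real_derivative
           (\<Sum>k\<in>J. exp_sum_powr_grad J \<beta> r (z y0) k * z' k)) (at y0 within X)"
proof -
  define l where "l y = ln (exp_sum J \<beta> (z y))" for y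
  have "(l has_real_derivative \<beta> * (\<Sum>k\<in>J. softmax J \<beta> (z y0) k * z' k)) (at y0 within X)"
    unfolding l_def by (rule ln_exp_sum_has_derivative[OF assms])
  then have "((\<lambda>y. exp (r * l y)) has_real_derivative
      exp (r * l y0) * (r * (\<beta> * (\<Sum>k\<in>J. softmax J \<beta> (z y0) k * z' k)))) (at y0 within X)"
    by (auto intro!: derivative_eq_intros)
  then show ?thesis
    unfolding exp_sum_powr_eq exp_sum_powr_grad_def l_def by (simp add: sum_distrib_left mult_ac)
qed

lemma exp_sum_powr_mult_softmax:
  "exp_sum J \<beta> z powr r * softmax J \<beta> z k = exp (\<beta> * z k + (r - 1) * ln (exp_sum J \<beta> z))"
  using exp_sum_pos[of \<beta> z]
  by (simp add: softmax_def exp_sum_powr_eq exp_add exp_diff left_diff_distrib)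

lemma sum_exp_sum_powr_hess:
  assumes "j \<in> J"
  shows "(\<Sum>k\<in>J. exp_sum_powr_hess J \<beta> r z j k * z' k)
    = r * \<beta>\<^sup>2 * exp_sum J \<beta> z powr r * softmax J \<beta> z j
        * (z' j + (r - 1) * (\<Sum>k\<in>J. softmax J \<beta> z k * z' k))"
proof -
  define C where "C = r * \<beta>\<^sup>2 * exp_sum J \<beta> z powr r * softmax J \<beta> z j"
  have "(\<Sum>k\<in>J. exp_sum_powr_hess J \<beta> r z j k * z' k)
      = (\<Sum>k\<in>J. C * (if j = k then z' k else 0) + C * (r - 1) * (softmax J \<beta> z k * z' k))"
    by (intro sum.cong) (auto simp: exp_sum_powr_hess_def C_def algebra_simps)
  also have "\<dots> = C * z' j + C * (r - 1) * (\<Sum>k\<in>J. softmax J \<beta> z k * z' k)"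
    using assms finite_J by (simp add: sum.distrib flip: sum_distrib_left)
  finally show ?thesis by (simp add: C_def algebra_simps)
qed

lemma exp_sum_powr_grad_has_derivative:
  assumes "\<And>k. k \<in> J \<Longrightarrow> ((\<lambda>y. z y k) has_real_derivative z' k) (at y0 within X)" and "j \<in> J"
  shows "((\<lambda>y. exp_sum_powr_grad J \<beta> r (z y) j) has_real_derivative
           (\<Sum>k\<in>J. exp_sum_powr_hess J \<beta> r (z y0) j k * z' k)) (at y0 within X)"
proof -
  define l where "l y = ln (exp_sum J \<beta> (z y))" for y
  have "(l has_real_derivative \<beta> * (\<Sum>k\<in>J. softmax J \<beta> (z y0) k * z' k)) (at y0 within X)"
    unfolding l_def by (rule ln_exp_sum_has_derivative[OF assms(1)])
  then have "((\<lambda>y. r * \<beta> * exp (\<beta> * z y j + (r - 1) * l y)) has_real_derivative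
      r * \<beta> * exp (\<beta> * z y0 j + (r - 1) * l y0)
        * (\<beta> * z' j + (r - 1) * (\<beta> * (\<Sum>k\<in>J. softmax J \<beta> (z y0) k * z' k)))) (at y0 within X)"
    by (auto intro!: derivative_eq_intros assms)
  moreover have "(\<lambda>y. exp_sum_powr_grad J \<beta> r (z y) j) = (\<lambda>y. r * \<beta> * exp (\<beta> * z y j + (r - 1) * l y))"
    by (simp add: fun_eq_iff exp_sum_powr_grad_def l_def mult.assoc exp_sum_powr_mult_softmax)
  moreover have "r * \<beta> * exp (\<beta> * z y0 j + (r - 1) * l y0)
        * (\<beta> * z' j + (r - 1) * (\<beta> * (\<Sum>k\<in>J. softmax J \<beta> (z y0) k * z' k)))
      = (\<Sum>k\<in>J. exp_sum_powr_hess J \<beta> r (z y0) j k * z' k)"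
    unfolding sum_exp_sum_powr_hess[OF assms(2)] l_def exp_sum_powr_mult_softmax[symmetric]
    by (simp add: power2_eq_square algebra_simps)
  ultimately show ?thesis by simp
qed

lemma exp_le_exp_sum_powr:
  assumes "j \<in> J" "0 \<le> r"
  shows "exp (r * \<beta> * z j) \<le> exp_sum J \<beta> z powr r"
proof -
  have "exp (\<beta> * z j) powr r \<le> exp_sum J \<beta> z powr r"
    using assms exp_le_exp_sum by (intro powr_mono2) auto
  then show ?thesis by (simp add: exp_powr_real mult_ac)
qed

lemma exp_sum_powr_le_exp_Max:
  assumes "0 \<le> \<beta>" "0 \<le> r"
  shows "exp_sum J \<beta> z powr r \<le> card J powr r * exp (r * \<beta> * Max (z ` J))"
  using powr_mono2[OF assms(2) less_imp_le[OF exp_sum_pos] exp_sum_le_card_exp_Max[OF assms(1)]]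
  by (simp add: powr_mult exp_powr_real mult_ac)

lemma exp_Max_le_exp_sum_powr:
  assumes "0 < r"
  shows "exp (c * Max (z ` J)) \<le> exp_sum J (c / r) z powr r"
proof -
  have "Max (z ` J) \<in> z ` J"
    using finite_J J_nonempty by (intro Max_in) auto
  then obtain j where "j \<in> J" "Max (z ` J) = z j"
    by auto
  then show ?thesis
    using exp_le_exp_sum_powr[of j r "c / r" z] assms by simp
qed

lemma exp_sum_powr_le_exp_bound:
  assumes "0 \<le> \<beta>" "0 \<le> r" "r \<le> 1" and bound: "\<And>j. j \<in> J \<Longrightarrow> \<bar>z j\<bar> \<le> T"
  shows "exp_sum J \<beta> z powr r \<le> card J * exp (\<beta> * T)"
proof -
  have "exp_sum J \<beta> z \<le> card J * exp (\<beta> * T)"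
    using sum_mono[of J "\<lambda>j. exp (\<beta> * z j)" "\<lambda>_. exp (\<beta> * T)"] bound assms(1)
    by (force simp: exp_sum_def abs_le_iff intro: mult_left_mono)
  moreover have "1 \<le> card J * exp (\<beta> * T)"
  proof -
    obtain j where "j \<in> J" using J_nonempty by auto
    then have "0 \<le> T" using bound[of j] by linarith
    then have "1 \<le> exp (\<beta> * T)"
      using assms(1) by simp
    moreover have "1 \<le> real (card J)"
      using finite_J J_nonempty by (simp add: Suc_leI card_gt_0_iff)
    ultimately show ?thesis
      using mult_mono[of 1 "real (card J)" 1 "exp (\<beta> * T)"] by simp
  qed
  moreover have "exp_sum J \<beta> z powr r \<le> max 1 (exp_sum J \<beta> z)"
    using assms(2,3) exp_sum_pos[of \<beta> z]
    by (cases "exp_sum J \<beta> z \<le> 1") (auto intro: powr_le1 order.trans[OF powr_mono[of r 1]])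
  ultimately show ?thesis by linarith
qed

lemma abs_exp_sum_powr_grad_le:
  assumes "0 \<le> \<beta>" "0 \<le> r" "r \<le> 1" "k \<in> J"
  shows "\<bar>exp_sum_powr_grad J \<beta> r z k\<bar> \<le> \<beta> * exp_sum J \<beta> z powr r"
proof -
  have "\<bar>exp_sum_powr_grad J \<beta> r z k\<bar> = r * (\<beta> * exp_sum J \<beta> z powr r) * softmax J \<beta> z k"
    using assms softmax_nonneg[of \<beta> z k] by (simp add: exp_sum_powr_grad_def abs_mult mult_ac)
  also have "\<dots> \<le> 1 * (\<beta> * exp_sum J \<beta> z powr r) * 1"
    using assms softmax_nonneg[of \<beta> z k] softmax_le_1[of k \<beta> z] by (intro mult_mono) auto
  finally show ?thesis by simp
qed

lemma abs_exp_sum_powr_hess_le: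
  assumes "0 \<le> \<beta>" "0 \<le> r" "r \<le> 1" "j \<in> J" "k \<in> J"
  shows "\<bar>exp_sum_powr_hess J \<beta> r z j k\<bar> \<le> \<beta>\<^sup>2 * exp_sum J \<beta> z powr r"
proof -
  let ?s = "softmax J \<beta> z"
  have "0 \<le> (1 - r) * ?s k" "(1 - r) * ?s k \<le> 1"
    using assms softmax_nonneg[of \<beta> z k] softmax_le_1[of k \<beta> z] by (auto intro: mult_le_one)
  then have factor: "\<bar>(if j = k then 1 else 0) + (r - 1) * ?s k\<bar> \<le> 1"
    by (auto simp: algebra_simps)
  have "\<bar>exp_sum_powr_hess J \<beta> r z j k\<bar>
      = r * (\<beta>\<^sup>2 * exp_sum J \<beta> z powr r) * ?s j * \<bar>(if j = k then 1 else 0) + (r - 1) * ?s k\<bar>"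
    using assms softmax_nonneg[of \<beta> z j]
    by (simp add: exp_sum_powr_hess_def abs_mult mult_ac del: of_bool_eq_1_iff)
  also have "\<dots> \<le> 1 * (\<beta>\<^sup>2 * exp_sum J \<beta> z powr r) * 1 * 1"
    using assms softmax_nonneg[of \<beta> z j] softmax_le_1[of j \<beta> z] factor
    by (intro mult_mono) auto
  finally show ?thesis by simp
qed

lemma exp_sum_powr_hess_nonpos:
  assumes "0 \<le> r" "r \<le> 1" "j \<noteq> k"
  shows "exp_sum_powr_hess J \<beta> r z j k \<le> 0"
proof -
  have "exp_sum_powr_hess J \<beta> r z j k
      = - ((r * \<beta>\<^sup>2 * exp_sum J \<beta> z powr r * softmax J \<beta> z j) * ((1 - r) * softmax J \<beta> z k))"
    using assms by (simp add: exp_sum_powr_hess_def algebra_simps)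
  also have "\<dots> \<le> 0"
    using assms softmax_nonneg by (simp add: zero_le_mult_iff)
  finally show ?thesis .
qed

lemma isCont_exp_sum:
  "(\<And>k. k \<in> J \<Longrightarrow> isCont (\<lambda>y. z y k) y0) \<Longrightarrow> isCont (\<lambda>y. exp_sum J \<beta> (z y)) y0"
  unfolding exp_sum_def by (intro continuous_intros) auto

lemma isCont_exp_sum_powr_grad:
  "(\<And>k. k \<in> J \<Longrightarrow> isCont (\<lambda>y. z y k) y0) \<Longrightarrow> k \<in> J \<Longrightarrow>
    isCont (\<lambda>y. exp_sum_powr_grad J \<beta> r (z y) k) y0"
  unfolding exp_sum_powr_grad_def softmax_def
  using exp_sum_pos[of \<beta> "z y0"] by (intro continuous_intros isCont_exp_sum) auto

lemma isCont_exp_sum_powr_hess: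
  "(\<And>k. k \<in> J \<Longrightarrow> isCont (\<lambda>y. z y k) y0) \<Longrightarrow> j \<in> J \<Longrightarrow> k \<in> J \<Longrightarrow>
    isCont (\<lambda>y. exp_sum_powr_hess J \<beta> r (z y) j k) y0"
  unfolding exp_sum_powr_hess_def softmax_def
  using exp_sum_pos[of \<beta> "z y0"] by (intro continuous_intros isCont_exp_sum) auto

end

lemma measurable_exp_sum_powr [measurable]:
  assumes [measurable]: "\<And>k. (\<lambda>u. Z u k) \<in> borel_measurable M"
  shows "(\<lambda>u. exp_sum J \<beta> (Z u) powr r) \<in> borel_measurable M"
  unfolding exp_sum_def by measurable

lemma measurable_exp_sum_powr_grad [measurable]:
  assumes [measurable]: "\<And>k. (\<lambda>u. Z u k) \<in> borel_measurable M"
  shows "(\<lambda>u. exp_sum_powr_grad J \<beta> r (Z u) k) \<in> borel_measurable M"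
  unfolding exp_sum_powr_grad_def softmax_def exp_sum_def by measurable

lemma measurable_exp_sum_powr_hess [measurable]:
  assumes [measurable]: "\<And>k. (\<lambda>u. Z u k) \<in> borel_measurable M"
  shows "(\<lambda>u. exp_sum_powr_hess J \<beta> r (Z u) j k) \<in> borel_measurable M"
  unfolding exp_sum_powr_hess_def softmax_def exp_sum_def by measurable

section \<open>Kahane's Gaussian comparison inequality\<close>

definition lincomb :: "'w set \<Rightarrow> ('w \<Rightarrow> real) \<Rightarrow> ('w \<Rightarrow> real) \<Rightarrow> real" where
  "lincomb W c u = (\<Sum>w\<in>W. c w * u w)"

lemma measurable_lincomb [measurable]: "lincomb W c \<in> borel_measurable (gauss W)"
  unfolding lincomb_def by measurable

lemma measurable_lincomb_pair [measurable]:
  assumes [measurable]: "\<And>w. w \<in> W \<Longrightarrow> (\<lambda>x. c x w) \<in> borel_measurable M"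
  shows "(\<lambda>x. lincomb W (c (fst x)) (snd x)) \<in> borel_measurable (M \<Otimes>\<^sub>M gauss W)"
  unfolding lincomb_def by measurable

lemma abs_lincomb_le:
  assumes "\<And>w. w \<in> W \<Longrightarrow> \<bar>c w\<bar> \<le> N"
  shows "\<bar>lincomb W c u\<bar> \<le> N * (\<Sum>w\<in>W. \<bar>u w\<bar>)"
proof -
  have "\<bar>lincomb W c u\<bar> \<le> (\<Sum>w\<in>W. \<bar>c w\<bar> * \<bar>u w\<bar>)"
    unfolding lincomb_def by (rule order_trans[OF sum_abs]) (simp add: abs_mult)
  also have "\<dots> \<le> (\<Sum>w\<in>W. N * \<bar>u w\<bar>)"
    by (intro sum_mono mult_right_mono assms) auto
  finally show ?thesis by (simp add: sum_distrib_left)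
qed

lemma lincomb_fun_upd_has_derivative:
  assumes "finite W" "w \<in> W"
  shows "((\<lambda>y. lincomb W c (u(w := y))) has_real_derivative c w) (at y0)"
proof -
  have "lincomb W c (u(w := y)) = c w * y + (\<Sum>v\<in>W - {w}. c v * u v)" for y
  proof -
    have "(\<Sum>v\<in>W - {w}. c v * (u(w := y)) v) = (\<Sum>v\<in>W - {w}. c v * u v)"
      by (rule sum.cong) auto
    then show ?thesis
      using assms by (simp add: lincomb_def sum.remove[of W w])
  qed
  then show ?thesis by (auto intro!: derivative_eq_intros)
qed

lemma isCont_lincomb_fun_upd: "isCont (\<lambda>y. lincomb W c (u(w := y))) y0"
proof -
  have upd: "isCont (\<lambda>y. (u(w := y)) v) y0" for v
    by (cases "v = w") simp_all
  show ?thesis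
    unfolding lincomb_def by (intro continuous_intros upd)
qed

lemma integral_sum_sum_mult:
  fixes F :: "'i \<Rightarrow> 'k \<Rightarrow> 'a \<Rightarrow> real"
  assumes "\<And>i k. i \<in> I \<Longrightarrow> k \<in> K \<Longrightarrow> integrable M (F i k)"
  shows "(\<integral>x. (\<Sum>i\<in>I. \<Sum>k\<in>K. c i k * F i k x) \<partial>M) = (\<Sum>i\<in>I. \<Sum>k\<in>K. c i k * integral\<^sup>L M (F i k))"
  using assms by (simp add: Bochner_Integration.integral_sum integrable_sum)

lemma abs_mult_add_mult_le: "\<bar>x * s + y * t\<bar> \<le> \<bar>s\<bar> + \<bar>t\<bar>" if "\<bar>x\<bar> \<le> 1" "\<bar>y\<bar> \<le> 1" for x y s t :: real
proof -
  have "\<bar>x * s\<bar> \<le> 1 * \<bar>s\<bar>" "\<bar>y * t\<bar> \<le> 1 * \<bar>t\<bar>"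
    unfolding abs_mult using that by (intro mult_right_mono; simp)+
  then show ?thesis by linarith
qed

lemma le_of_le_powr_mult:
  fixes A B m :: real
  assumes "1 \<le> m" and le: "\<And>r. 0 < r \<Longrightarrow> r \<le> 1 \<Longrightarrow> A \<le> m powr r * B"
  shows "A \<le> B"
proof -
  have "((\<lambda>r. m powr r * B) \<longlongrightarrow> m powr 0 * B) (at_right 0)"
    using assms(1) by (intro tendsto_intros) auto
  then have lim: "((\<lambda>r. m powr r * B) \<longlongrightarrow> B) (at_right 0)"
    using assms(1) by simp
  have "eventually (\<lambda>r. A \<le> m powr r * B) (at_right (0::real))"
    unfolding eventually_at_right_field by (intro exI[of _ 1]) (auto intro: le)
  then show ?thesis
    by (rule tendsto_lowerbound[OF lim]) simp
qed

text \<open>Under \<open>gauss W\<close>, \<open>X j = lincomb W (a j)\<close> and \<open>Y j = lincomb W (b j)\<close> are centred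
  Gaussian vectors with covariances \<open>\<Sum>w\<in>W. a j w * a k w\<close> and \<open>\<Sum>w\<in>W. b j w * b k w\<close>;
  the hypotheses say that \<open>X\<close> and \<open>Y\<close> are independent, have the same variances, and that
  \<open>Y\<close> is less correlated than \<open>X\<close>.\<close>
locale gaussian_pair =
  fixes W :: "'w set" and J :: "'j set" and a b :: "'j \<Rightarrow> 'w \<Rightarrow> real"
  assumes finite_W: "finite W" and finite_J: "finite J" and J_nonempty: "J \<noteq> {}"
    and independent: "\<And>j k. j \<in> J \<Longrightarrow> k \<in> J \<Longrightarrow> (\<Sum>w\<in>W. a j w * b k w) = 0"
    and variance_eq: "\<And>j. j \<in> J \<Longrightarrow> (\<Sum>w\<in>W. a j w * a j w) = (\<Sum>w\<in>W. b j w * b j w)"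
    and covariance_le:
      "\<And>j k. j \<in> J \<Longrightarrow> k \<in> J \<Longrightarrow> j \<noteq> k \<Longrightarrow> (\<Sum>w\<in>W. b j w * b k w) \<le> (\<Sum>w\<in>W. a j w * a k w)"
begin

abbreviation abs_sum :: "('w \<Rightarrow> real) \<Rightarrow> real" where
  "abs_sum u \<equiv> \<Sum>w\<in>W. \<bar>u w\<bar>"

definition interp_coef :: "real \<Rightarrow> 'j \<Rightarrow> 'w \<Rightarrow> real" where
  "interp_coef \<theta> j w = cos \<theta> * a j w + sin \<theta> * b j w"

definition interp_coef' :: "real \<Rightarrow> 'j \<Rightarrow> 'w \<Rightarrow> real" where
  "interp_coef' \<theta> j w = - sin \<theta> * a j w + cos \<theta> * b j w"

definition interp :: "real \<Rightarrow> ('w \<Rightarrow> real) \<Rightarrow> 'j \<Rightarrow> real" where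
  "interp \<theta> u j = lincomb W (interp_coef \<theta> j) u"

definition interp' :: "real \<Rightarrow> ('w \<Rightarrow> real) \<Rightarrow> 'j \<Rightarrow> real" where
  "interp' \<theta> u j = lincomb W (interp_coef' \<theta> j) u"

definition interp_deriv :: "real \<Rightarrow> real \<Rightarrow> real \<Rightarrow> ('w \<Rightarrow> real) \<Rightarrow> real" where
  "interp_deriv \<beta> r \<theta> u = (\<Sum>j\<in>J. exp_sum_powr_grad J \<beta> r (interp \<theta> u) j * interp' \<theta> u j)"

definition coef_bound :: real where
  "coef_bound = (\<Sum>j\<in>J. \<Sum>w\<in>W. \<bar>a j w\<bar> + \<bar>b j w\<bar>)"

lemma interp_0: "interp 0 u = (\<lambda>j. lincomb W (a j) u)"
  unfolding interp_def interp_coef_def by simp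

lemma interp_pi_half: "interp (pi / 2) u = (\<lambda>j. lincomb W (b j) u)"
  unfolding interp_def interp_coef_def by simp

lemma abs_coef_le_coef_bound:
  assumes "j \<in> J" "w \<in> W"
  shows "\<bar>a j w\<bar> + \<bar>b j w\<bar> \<le> coef_bound"
proof -
  have "\<bar>a j w\<bar> + \<bar>b j w\<bar> \<le> (\<Sum>w\<in>W. \<bar>a j w\<bar> + \<bar>b j w\<bar>)"
    using assms finite_W by (intro member_le_sum) auto
  also have "\<dots> \<le> coef_bound"
    unfolding coef_bound_def using assms finite_J
    by (intro member_le_sum[where f = "\<lambda>j. \<Sum>w\<in>W. \<bar>a j w\<bar> + \<bar>b j w\<bar>"]) (auto intro: sum_nonneg)
  finally show ?thesis .
qed

lemma abs_interp_coef_le: "j \<in> J \<Longrightarrow> w \<in> W \<Longrightarrow> \<bar>interp_coef \<theta> j w\<bar> \<le> coef_bound"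
  unfolding interp_coef_def
  using abs_mult_add_mult_le[of "cos \<theta>" "sin \<theta>" "a j w" "b j w"] abs_coef_le_coef_bound[of j w] by simp

lemma abs_interp_coef'_le: "j \<in> J \<Longrightarrow> w \<in> W \<Longrightarrow> \<bar>interp_coef' \<theta> j w\<bar> \<le> coef_bound"
  unfolding interp_coef'_def
  using abs_mult_add_mult_le[of "- sin \<theta>" "cos \<theta>" "a j w" "b j w"] abs_coef_le_coef_bound[of j w] by simp

lemma abs_interp_le: "j \<in> J \<Longrightarrow> \<bar>interp \<theta> u j\<bar> \<le> coef_bound * abs_sum u"
  unfolding interp_def by (rule abs_lincomb_le) (rule abs_interp_coef_le)

lemma abs_interp'_le: "j \<in> J \<Longrightarrow> \<bar>interp' \<theta> u j\<bar> \<le> coef_bound * abs_sum u"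
  unfolding interp'_def by (rule abs_lincomb_le) (rule abs_interp_coef'_le)

lemma measurable_interp [measurable]: "(\<lambda>u. interp \<theta> u k) \<in> borel_measurable (gauss W)"
  unfolding interp_def by measurable

lemma measurable_interp_pair [measurable]:
  "(\<lambda>x. interp (fst x) (snd x) k) \<in> borel_measurable (lborel \<Otimes>\<^sub>M gauss W)"
  "(\<lambda>x. interp' (fst x) (snd x) k) \<in> borel_measurable (lborel \<Otimes>\<^sub>M gauss W)"
  unfolding interp_def interp'_def interp_coef_def interp_coef'_def
  by (rule measurable_lincomb_pair; measurable)+

lemma measurable_interp_deriv_pair [measurable]:
  "(\<lambda>x. interp_deriv \<beta> r (fst x) (snd x)) \<in> borel_measurable (lborel \<Otimes>\<^sub>M gauss W)"
  unfolding interp_deriv_def by measurable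

lemma interp_has_derivative_theta:
  "((\<lambda>\<theta>. interp \<theta> u k) has_real_derivative interp' \<theta>0 u k) (at \<theta>0 within X)"
  unfolding interp_def interp'_def lincomb_def interp_coef_def interp_coef'_def
  by (rule DERIV_sum) (auto intro!: derivative_eq_intros)

lemma isCont_interp_deriv: "isCont (\<lambda>\<theta>. interp_deriv \<beta> r \<theta> u) \<theta>0"
proof -
  have "isCont (\<lambda>\<theta>. interp \<theta> u k) \<theta>0" "isCont (\<lambda>\<theta>. interp' \<theta> u k) \<theta>0" for k
    unfolding interp_def interp'_def lincomb_def interp_coef_def interp_coef'_def
    by (intro continuous_intros)+
  then show ?thesis
    unfolding interp_deriv_def
    by (intro continuous_intros isCont_exp_sum_powr_grad[OF finite_J J_nonempty])
qed

context
  fixes \<beta> r :: real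
  assumes \<beta>: "0 \<le> \<beta>" and r: "0 \<le> r" "r \<le> 1"
begin

lemma exp_sum_powr_interp_le:
  "exp_sum J \<beta> (interp \<theta> u) powr r \<le> card J * exp (\<beta> * (coef_bound * abs_sum u))"
  by (rule exp_sum_powr_le_exp_bound[OF finite_J J_nonempty \<beta> r abs_interp_le])

lemma abs_exp_sum_powr_grad_interp_le:
  "j \<in> J \<Longrightarrow> \<bar>exp_sum_powr_grad J \<beta> r (interp \<theta> u) j\<bar> \<le> \<beta> * card J * exp (\<beta> * coef_bound * abs_sum u)"
  using abs_exp_sum_powr_grad_le[OF finite_J J_nonempty \<beta> r, of j "interp \<theta> u"]
    mult_left_mono[OF exp_sum_powr_interp_le \<beta>, of \<theta> u]
  by (simp add: mult_ac)

lemma abs_sum_hess_interp_le: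
  assumes "j \<in> J" "w \<in> W"
  shows "\<bar>\<Sum>k\<in>J. exp_sum_powr_hess J \<beta> r (interp \<theta> u) j k * interp_coef \<theta> k w\<bar>
    \<le> card J * (\<beta>\<^sup>2 * card J * coef_bound) * exp (\<beta> * coef_bound * abs_sum u)"
proof -
  let ?C = "\<beta>\<^sup>2 * card J * coef_bound * exp (\<beta> * coef_bound * abs_sum u)"
  have summand_le: "\<bar>exp_sum_powr_hess J \<beta> r (interp \<theta> u) j k * interp_coef \<theta> k w\<bar> \<le> ?C" if "k \<in> J" for k
  proof -
    have "\<bar>exp_sum_powr_hess J \<beta> r (interp \<theta> u) j k\<bar> \<le> \<beta>\<^sup>2 * (card J * exp (\<beta> * (coef_bound * abs_sum u)))"
      using abs_exp_sum_powr_hess_le[OF finite_J J_nonempty \<beta> r assms(1) that, of "interp \<theta> u"]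
        mult_left_mono[OF exp_sum_powr_interp_le, of "\<beta>\<^sup>2" \<theta> u] by simp
    then have "\<bar>exp_sum_powr_hess J \<beta> r (interp \<theta> u) j k\<bar> * \<bar>interp_coef \<theta> k w\<bar>
        \<le> \<beta>\<^sup>2 * (card J * exp (\<beta> * (coef_bound * abs_sum u))) * coef_bound"
      using abs_interp_coef_le[OF that assms(2), of \<theta>] by (intro mult_mono) auto
    then show ?thesis by (simp add: abs_mult mult_ac)
  qed
  have "\<bar>\<Sum>k\<in>J. exp_sum_powr_hess J \<beta> r (interp \<theta> u) j k * interp_coef \<theta> k w\<bar>
      \<le> (\<Sum>k\<in>J. \<bar>exp_sum_powr_hess J \<beta> r (interp \<theta> u) j k * interp_coef \<theta> k w\<bar>)"
    by (rule sum_abs)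
  also have "\<dots> \<le> (\<Sum>k\<in>J. ?C)"
    by (rule sum_mono) (rule summand_le)
  finally show ?thesis by (simp add: mult_ac)
qed

lemma integral_coord_mult_grad_interp:
  assumes "j \<in> J" "w \<in> W"
  shows "(\<integral>u. u w * exp_sum_powr_grad J \<beta> r (interp \<theta> u) j \<partial>gauss W)
    = (\<integral>u. (\<Sum>k\<in>J. exp_sum_powr_hess J \<beta> r (interp \<theta> u) j k * interp_coef \<theta> k w) \<partial>gauss W)"
proof (rule gauss_integration_by_parts[OF finite_W assms(2), where K = "\<beta> * card J"
    and L = "\<beta> * coef_bound" and K' = "card J * (\<beta>\<^sup>2 * card J * coef_bound)" and L' = "\<beta> * coef_bound"])
  fix u :: "'w \<Rightarrow> real" and y :: real
  have "((\<lambda>y. interp \<theta> (u(w := y)) k) has_real_derivative interp_coef \<theta> k w) (at y)" for k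
    unfolding interp_def by (rule lincomb_fun_upd_has_derivative[OF finite_W assms(2)])
  then show "((\<lambda>y. exp_sum_powr_grad J \<beta> r (interp \<theta> (u(w := y))) j) has_real_derivative
      (\<Sum>k\<in>J. exp_sum_powr_hess J \<beta> r (interp \<theta> (u(w := y))) j k * interp_coef \<theta> k w)) (at y)"
    by (rule exp_sum_powr_grad_has_derivative[OF finite_J J_nonempty _ assms(1),
          where z = "\<lambda>y. interp \<theta> (u(w := y))" and z' = "\<lambda>k. interp_coef \<theta> k w"])
  have "isCont (\<lambda>y. interp \<theta> (u(w := y)) k) y" for k
    unfolding interp_def by (rule isCont_lincomb_fun_upd)
  then show "isCont (\<lambda>y. \<Sum>k\<in>J. exp_sum_powr_hess J \<beta> r (interp \<theta> (u(w := y))) j k * interp_coef \<theta> k w) y"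
    by (intro continuous_intros isCont_exp_sum_powr_hess[OF finite_J J_nonempty _ assms(1),
          where z = "\<lambda>y. interp \<theta> (u(w := y))"])
  show "\<bar>exp_sum_powr_grad J \<beta> r (interp \<theta> u) j\<bar> \<le> \<beta> * card J * exp (\<beta> * coef_bound * abs_sum u)"
    by (rule abs_exp_sum_powr_grad_interp_le[OF assms(1)])
  show "\<bar>\<Sum>k\<in>J. exp_sum_powr_hess J \<beta> r (interp \<theta> u) j k * interp_coef \<theta> k w\<bar>
      \<le> card J * (\<beta>\<^sup>2 * card J * coef_bound) * exp (\<beta> * coef_bound * abs_sum u)"
    by (rule abs_sum_hess_interp_le[OF assms])
next
  show "(\<lambda>u. exp_sum_powr_grad J \<beta> r (interp \<theta> u) j) \<in> borel_measurable (gauss W)"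
    by measurable
  show "(\<lambda>u. \<Sum>k\<in>J. exp_sum_powr_hess J \<beta> r (interp \<theta> u) j k * interp_coef \<theta> k w) \<in> borel_measurable (gauss W)"
    by measurable
qed

lemma integrable_coord_mult_grad_interp:
  assumes "j \<in> J" "w \<in> W"
  shows "integrable (gauss W) (\<lambda>u. u w * exp_sum_powr_grad J \<beta> r (interp \<theta> u) j)"
proof (rule integrable_gauss_exp_bound[OF finite_W])
  show "\<bar>u w * exp_sum_powr_grad J \<beta> r (interp \<theta> u) j\<bar>
      \<le> \<beta> * card J * exp ((\<beta> * coef_bound + 1) * abs_sum u)" for u
    using assms finite_W \<beta>
    by (intro abs_mult_le_exp_bound abs_exp_sum_powr_grad_interp_le member_le_sum) auto
qed (use assms in measurable)

lemma integrable_sum_hess_interp: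
  assumes "j \<in> J" "w \<in> W"
  shows "integrable (gauss W) (\<lambda>u. \<Sum>k\<in>J. exp_sum_powr_hess J \<beta> r (interp \<theta> u) j k * interp_coef \<theta> k w)"
  by (rule integrable_gauss_exp_bound[OF finite_W _ abs_sum_hess_interp_le[OF assms]]) measurable

lemma sum_interp_coef'_mult_interp_coef:
  assumes "j \<in> J" "k \<in> J"
  shows "(\<Sum>w\<in>W. interp_coef' \<theta> j w * interp_coef \<theta> k w)
    = sin \<theta> * cos \<theta> * ((\<Sum>w\<in>W. b j w * b k w) - (\<Sum>w\<in>W. a j w * a k w))"
proof -
  have "(\<Sum>w\<in>W. interp_coef' \<theta> j w * interp_coef \<theta> k w) =
      - (sin \<theta> * cos \<theta>) * (\<Sum>w\<in>W. a j w * a k w) - (sin \<theta>)\<^sup>2 * (\<Sum>w\<in>W. a j w * b k w)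
      + (cos \<theta>)\<^sup>2 * (\<Sum>w\<in>W. a k w * b j w) + sin \<theta> * cos \<theta> * (\<Sum>w\<in>W. b j w * b k w)"
    unfolding interp_coef'_def interp_coef_def
    by (simp add: sum_distrib_left sum_subtractf sum.distrib sum_negf power2_eq_square algebra_simps)
  then show ?thesis
    using independent[OF assms] independent[OF assms(2,1)] by (simp add: algebra_simps)
qed

text \<open>Gaussian integration by parts turns the \<open>\<theta>\<close>-derivative into a pairing of the Hessian
  with \<open>sin \<theta> cos \<theta> (Cov Y - Cov X)\<close>: the diagonal vanishes by equal variances, and off the
  diagonal both factors are nonpositive.\<close>
lemma integral_interp_deriv_nonneg:
  assumes "0 \<le> \<theta>" "\<theta> \<le> pi / 2"
  shows "0 \<le> integral\<^sup>L (gauss W) (interp_deriv \<beta> r \<theta>)"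
proof -
  let ?H = "\<lambda>u j k. exp_sum_powr_hess J \<beta> r (interp \<theta> u) j k"
  have "integral\<^sup>L (gauss W) (interp_deriv \<beta> r \<theta>)
      = (\<integral>u. (\<Sum>j\<in>J. \<Sum>w\<in>W. interp_coef' \<theta> j w * (u w * exp_sum_powr_grad J \<beta> r (interp \<theta> u) j)) \<partial>gauss W)"
    unfolding interp_deriv_def interp'_def lincomb_def by (simp add: sum_distrib_left mult_ac)
  also have "\<dots> = (\<Sum>j\<in>J. \<Sum>w\<in>W. interp_coef' \<theta> j w
      * (\<integral>u. (\<Sum>k\<in>J. ?H u j k * interp_coef \<theta> k w) \<partial>gauss W))"
    by (simp add: integral_sum_sum_mult integrable_coord_mult_grad_interp integral_coord_mult_grad_interp)
  also have "\<dots> = (\<integral>u. (\<Sum>j\<in>J. \<Sum>w\<in>W. interp_coef' \<theta> j w * (\<Sum>k\<in>J. ?H u j k * interp_coef \<theta> k w)) \<partial>gauss W)"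
    by (simp add: integral_sum_sum_mult integrable_sum_hess_interp)
  also have "\<dots> = (\<integral>u. (\<Sum>j\<in>J. \<Sum>k\<in>J. ?H u j k * (\<Sum>w\<in>W. interp_coef' \<theta> j w * interp_coef \<theta> k w)) \<partial>gauss W)"
    by (intro Bochner_Integration.integral_cong refl sum.cong)
      (simp add: sum_distrib_left sum.swap[of _ W] mult_ac)
  also have "\<dots> \<ge> 0"
  proof (intro integral_nonneg_AE AE_I2 sum_nonneg)
    fix u j k assume jk: "j \<in> J" "k \<in> J"
    have sc: "0 \<le> sin \<theta> * cos \<theta>"
      using assms by (intro mult_nonneg_nonneg sin_ge_zero cos_ge_zero) auto
    show "0 \<le> ?H u j k * (\<Sum>w\<in>W. interp_coef' \<theta> j w * interp_coef \<theta> k w)"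
    proof (cases "j = k")
      case False
      have "sin \<theta> * cos \<theta> * ((\<Sum>w\<in>W. b j w * b k w) - (\<Sum>w\<in>W. a j w * a k w)) \<le> 0"
        using covariance_le[OF jk False] sc by (simp add: mult_nonneg_nonpos)
      then show ?thesis
        unfolding sum_interp_coef'_mult_interp_coef[OF jk]
        by (intro mult_nonpos_nonpos exp_sum_powr_hess_nonpos[OF finite_J J_nonempty r False])
    qed (simp add: sum_interp_coef'_mult_interp_coef jk variance_eq)
  qed
  finally show ?thesis .
qed

lemma abs_interp_deriv_le:
  "\<bar>interp_deriv \<beta> r \<theta> u\<bar> \<le> card J * (\<beta> * card J) * exp ((\<beta> + 1) * (coef_bound * abs_sum u))"
proof -
  let ?C = "\<beta> * card J * exp ((\<beta> + 1) * (coef_bound * abs_sum u))"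
  have summand_le: "\<bar>interp' \<theta> u j * exp_sum_powr_grad J \<beta> r (interp \<theta> u) j\<bar> \<le> ?C" if "j \<in> J" for j
  proof (rule abs_mult_le_exp_bound)
    show "\<bar>exp_sum_powr_grad J \<beta> r (interp \<theta> u) j\<bar> \<le> \<beta> * card J * exp (\<beta> * (coef_bound * abs_sum u))"
      using abs_exp_sum_powr_grad_interp_le[OF that, of \<theta> u] by (simp add: mult_ac)
  qed (use abs_interp'_le[OF that] \<beta> in auto)
  have "\<bar>interp_deriv \<beta> r \<theta> u\<bar> \<le> (\<Sum>j\<in>J. \<bar>interp' \<theta> u j * exp_sum_powr_grad J \<beta> r (interp \<theta> u) j\<bar>)"
    unfolding interp_deriv_def by (rule order.trans[OF sum_abs]) (simp add: mult.commute)
  also have "\<dots> \<le> (\<Sum>j\<in>J. ?C)"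
    by (rule sum_mono) (rule summand_le)
  finally show ?thesis by (simp add: mult_ac)
qed

lemma exp_sum_powr_interp_diff_eq_integral:
  "exp_sum J \<beta> (interp (pi / 2) u) powr r - exp_sum J \<beta> (interp 0 u) powr r
    = (\<integral>\<theta>. indicator {0..pi / 2} \<theta> * interp_deriv \<beta> r \<theta> u \<partial>lborel)"
proof -
  have "((\<lambda>\<theta>. exp_sum J \<beta> (interp \<theta> u) powr r) has_real_derivative interp_deriv \<beta> r x u)
      (at x within {0..pi / 2})" for x
    unfolding interp_deriv_def
    by (rule exp_sum_powr_has_derivative[OF finite_J J_nonempty interp_has_derivative_theta])
  then have "(\<integral>\<theta>. indicator {0..pi / 2} \<theta> *\<^sub>R interp_deriv \<beta> r \<theta> u \<partial>lborel)
      = exp_sum J \<beta> (interp (pi / 2) u) powr r - exp_sum J \<beta> (interp 0 u) powr r"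
    by (intro integral_FTC_atLeastAtMost continuous_at_imp_continuous_on ballI isCont_interp_deriv)
      (auto simp: has_real_derivative_iff_has_vector_derivative)
  then show ?thesis by simp
qed

lemma integrable_interp_deriv_pair:
  "integrable (lborel \<Otimes>\<^sub>M gauss W) (\<lambda>(\<theta>, u). indicator {0..pi / 2} \<theta> * interp_deriv \<beta> r \<theta> u)"
proof -
  interpret pair_sigma_finite lborel "gauss W"
    by (simp add: pair_sigma_finite_def lborel.sigma_finite_measure_axioms
        prob_space_imp_sigma_finite prob_space_gauss)
  define K where "K = card J * (\<beta> * card J)"
  define G where "G x = indicator {0..pi / 2} (fst x) * (K * exp ((\<beta> + 1) * coef_bound * abs_sum (snd x)))"
    for x :: "real \<times> ('w \<Rightarrow> real)"
  have [measurable]: "G \<in> borel_measurable (lborel \<Otimes>\<^sub>M gauss W)"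
    unfolding G_def by measurable
  have K: "0 \<le> K" unfolding K_def using \<beta> by simp
  have "integrable (lborel \<Otimes>\<^sub>M gauss W) G"
  proof (rule Fubini_integrable)
    have "integrable (gauss W) (\<lambda>u. exp ((\<beta> + 1) * coef_bound * abs_sum u))"
      by (rule integrable_gauss_exp_sum_abs[OF finite_W])
    then show "AE x in lborel. integrable (gauss W) (\<lambda>y. G (x, y))"
      unfolding G_def by (intro AE_I2) auto
    have "(\<integral>y. norm (G (x, y)) \<partial>gauss W)
        = indicator {0..pi / 2} x * (K * (\<integral>u. exp ((\<beta> + 1) * coef_bound * abs_sum u) \<partial>gauss W))" for x
      unfolding G_def using K by (simp add: abs_mult)
    then show "integrable lborel (\<lambda>x. \<integral>y. norm (G (x, y)) \<partial>gauss W)"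
      by (simp add: integrable_real_indicator)
  qed measurable
  then show ?thesis
  proof (rule Bochner_Integration.integrable_bound)
    show "AE x in lborel \<Otimes>\<^sub>M gauss W.
        norm ((\<lambda>(\<theta>, u). indicator {0..pi / 2} \<theta> * interp_deriv \<beta> r \<theta> u) x) \<le> norm (G x)"
      using abs_interp_deriv_le K \<beta>
      by (intro AE_I2) (auto simp: G_def K_def indicator_def abs_mult abs_of_nonneg mult_ac)
  qed (unfold case_prod_beta, measurable)
qed

lemma integrable_exp_sum_powr_interp:
  "integrable (gauss W) (\<lambda>u. exp_sum J \<beta> (interp \<theta> u) powr r)"
proof (rule integrable_gauss_exp_bound[OF finite_W])
  show "\<bar>exp_sum J \<beta> (interp \<theta> u) powr r\<bar> \<le> card J * exp ((\<beta> * coef_bound) * abs_sum u)" for u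
    using exp_sum_powr_interp_le[of \<theta> u] by (simp add: mult_ac)
qed measurable

theorem kahane_comparison:
  "(\<integral>u. exp_sum J \<beta> (\<lambda>j. lincomb W (a j) u) powr r \<partial>gauss W)
     \<le> (\<integral>u. exp_sum J \<beta> (\<lambda>j. lincomb W (b j) u) powr r \<partial>gauss W)"
proof -
  interpret pair_sigma_finite lborel "gauss W"
    by (simp add: pair_sigma_finite_def lborel.sigma_finite_measure_axioms
        prob_space_imp_sigma_finite prob_space_gauss)
  have "(\<integral>u. exp_sum J \<beta> (interp (pi / 2) u) powr r \<partial>gauss W) - (\<integral>u. exp_sum J \<beta> (interp 0 u) powr r \<partial>gauss W)
      = (\<integral>u. (\<integral>\<theta>. indicator {0..pi / 2} \<theta> * interp_deriv \<beta> r \<theta> u \<partial>lborel) \<partial>gauss W)"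
    by (simp add: exp_sum_powr_interp_diff_eq_integral integrable_exp_sum_powr_interp flip: Bochner_Integration.integral_diff)
  also have "\<dots> = (\<integral>\<theta>. (\<integral>u. indicator {0..pi / 2} \<theta> * interp_deriv \<beta> r \<theta> u \<partial>gauss W) \<partial>lborel)"
    by (rule Fubini_integral[OF integrable_interp_deriv_pair])
  also have "\<dots> \<ge> 0"
  proof (rule integral_nonneg_AE, rule AE_I2)
    fix \<theta> :: real
    show "0 \<le> (\<integral>u. indicator {0..pi / 2} \<theta> * interp_deriv \<beta> r \<theta> u \<partial>gauss W)"
      using integral_interp_deriv_nonneg[of \<theta>] by (cases "\<theta> \<in> {0..pi / 2}") simp_all
  qed
  finally show ?thesis
    by (simp add: interp_0 interp_pi_half)
qed

end

lemma integrable_exp_Max_interp: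
  assumes "0 \<le> c"
  shows "integrable (gauss W) (\<lambda>u. exp (c * Max (interp \<theta> u ` J)))"
proof (rule integrable_gauss_exp_bound[OF finite_W])
  fix u
  have "Max (interp \<theta> u ` J) \<le> coef_bound * abs_sum u"
    using finite_J J_nonempty abs_interp_le by (simp add: Max_le_iff abs_le_iff)
  then show "\<bar>exp (c * Max (interp \<theta> u ` J))\<bar> \<le> 1 * exp ((c * coef_bound) * abs_sum u)"
    using assms(1) by (simp add: mult_left_mono mult.assoc)
qed (use finite_J in measurable)

theorem integral_exp_Max_le:
  assumes "0 < c"
  shows "(\<integral>u. exp (c * Max ((\<lambda>j. lincomb W (a j) u) ` J)) \<partial>gauss W)
    \<le> (\<integral>u. exp (c * Max ((\<lambda>j. lincomb W (b j) u) ` J)) \<partial>gauss W)"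
proof (rule le_of_le_powr_mult)
  show "1 \<le> real (card J)"
    using finite_J J_nonempty by (simp add: Suc_leI card_gt_0_iff)
  fix r :: real assume r: "0 < r" "r \<le> 1"
  have \<beta>: "0 \<le> c / r" and rc: "r * (c / r) = c" using assms r by auto
  have "(\<integral>u. exp (c * Max (interp 0 u ` J)) \<partial>gauss W)
      \<le> (\<integral>u. exp_sum J (c / r) (interp 0 u) powr r \<partial>gauss W)"
    using assms r
    by (intro integral_mono integrable_exp_Max_interp integrable_exp_sum_powr_interp
        exp_Max_le_exp_sum_powr[OF finite_J J_nonempty]) auto
  also have "\<dots> \<le> (\<integral>u. exp_sum J (c / r) (interp (pi / 2) u) powr r \<partial>gauss W)"
    using kahane_comparison[OF \<beta>, of r] r by (simp add: interp_0 interp_pi_half)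
  also have "\<dots> \<le> (\<integral>u. card J powr r * exp (c * Max (interp (pi / 2) u ` J)) \<partial>gauss W)"
    using exp_sum_powr_le_exp_Max[OF finite_J J_nonempty \<beta>, of r] assms r
    by (intro integral_mono integrable_exp_Max_interp integrable_exp_sum_powr_interp
        integrable_mult_right) (auto simp: rc)
  finally show "(\<integral>u. exp (c * Max ((\<lambda>j. lincomb W (a j) u) ` J)) \<partial>gauss W)
      \<le> card J powr r * (\<integral>u. exp (c * Max ((\<lambda>j. lincomb W (b j) u) ` J)) \<partial>gauss W)"
    by (simp add: interp_0 interp_pi_half)
qed

end

lemma measurable_gauss_reindex:
  "f \<in> I \<rightarrow> K \<Longrightarrow> (\<lambda>u. \<lambda>n\<in>I. u (f n)) \<in> gauss K \<rightarrow>\<^sub>M gauss I"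
  by (rule measurable_restrict) (auto intro!: measurable_component_singleton)

lemma distr_gauss_reindex:
  "inj_on f I \<Longrightarrow> f \<in> I \<rightarrow> K \<Longrightarrow> distr (gauss K) (gauss I) (\<lambda>u. \<lambda>n\<in>I. u (f n)) = gauss I"
  using distr_PiM_reindex[of K "\<lambda>_. std_normal" f I] prob_space_std_normal by simp

lemma integral_gauss_reindex:
  fixes F :: "('i \<Rightarrow> real) \<Rightarrow> real"
  assumes "inj_on f I" "f \<in> I \<rightarrow> K" and [measurable]: "F \<in> borel_measurable (gauss I)"
  shows "integral\<^sup>L (gauss I) F = (\<integral>u. F (\<lambda>n\<in>I. u (f n)) \<partial>gauss K)"
proof -
  have "integral\<^sup>L (gauss I) F = integral\<^sup>L (distr (gauss K) (gauss I) (\<lambda>u. \<lambda>n\<in>I. u (f n))) F"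
    unfolding distr_gauss_reindex[OF assms(1,2)] ..
  also have "\<dots> = (\<integral>u. F (\<lambda>n\<in>I. u (f n)) \<partial>gauss K)"
    by (rule integral_distr[OF measurable_gauss_reindex[OF assms(2)] assms(3)])
  finally show ?thesis .
qed

lemma integrable_gauss_reindex:
  fixes F :: "('i \<Rightarrow> real) \<Rightarrow> real"
  assumes "inj_on f I" "f \<in> I \<rightarrow> K" and [measurable]: "F \<in> borel_measurable (gauss I)"
  shows "integrable (gauss I) F \<longleftrightarrow> integrable (gauss K) (\<lambda>u. F (\<lambda>n\<in>I. u (f n)))"
proof -
  have "integrable (gauss I) F \<longleftrightarrow> integrable (distr (gauss K) (gauss I) (\<lambda>u. \<lambda>n\<in>I. u (f n))) F"
    unfolding distr_gauss_reindex[OF assms(1,2)] ..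
  also have "\<dots> \<longleftrightarrow> integrable (gauss K) (\<lambda>u. F (\<lambda>n\<in>I. u (f n)))"
    by (rule integrable_distr_eq[OF measurable_gauss_reindex[OF assms(2)] assms(3)])
  finally show ?thesis .
qed

lemma integral_gauss_image:
  fixes F :: "('i \<Rightarrow> real) \<Rightarrow> real"
  assumes "inj_on f I" and [measurable]: "F \<in> borel_measurable (gauss I)"
    and local: "\<And>u u'. (\<And>i. i \<in> I \<Longrightarrow> u i = u' i) \<Longrightarrow> F u = F u'"
  shows "(\<lambda>v. F (\<lambda>i. v (f i))) \<in> borel_measurable (gauss (f ` I))"
    and "(\<integral>v. F (\<lambda>i. v (f i)) \<partial>gauss (f ` I)) = integral\<^sup>L (gauss I) F"
proof -
  have eq: "(\<lambda>v. F (\<lambda>i. v (f i))) = (\<lambda>v. F (\<lambda>i\<in>I. v (f i)))"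
    by (rule ext, rule local) simp
  show "(\<lambda>v. F (\<lambda>i. v (f i))) \<in> borel_measurable (gauss (f ` I))"
    unfolding eq by (rule measurable_compose[OF measurable_gauss_reindex assms(2)]) auto
  show "(\<integral>v. F (\<lambda>i. v (f i)) \<partial>gauss (f ` I)) = integral\<^sup>L (gauss I) F"
    unfolding eq by (rule integral_gauss_reindex[symmetric, OF assms(1) _ assms(2)]) auto
qed

lemma integral_gauss_insert_exp_mult:
  fixes I :: "'i set" and F :: "('i \<Rightarrow> real) \<Rightarrow> real"
  assumes "finite I" "i \<notin> I" and [measurable]: "F \<in> borel_measurable (gauss I)"
    and local: "\<And>u u'. (\<And>j. j \<in> I \<Longrightarrow> u j = u' j) \<Longrightarrow> F u = F u'"
    and "integrable (gauss (insert i I)) (\<lambda>u. exp (t * u i) * F u)"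
  shows "(\<integral>u. exp (t * u i) * F u \<partial>gauss (insert i I)) = exp (t\<^sup>2 / 2) * integral\<^sup>L (gauss I) F"
proof -
  interpret product_prob_space "\<lambda>_::'i. std_normal" by (rule product_prob_space_std_normal)
  have "F (x(i := y)) = F x" for x y
    using assms(2) by (intro local) auto
  then have "(\<integral>u. exp (t * u i) * F u \<partial>gauss (insert i I))
      = (\<integral>x. (\<integral>y. exp (t * y) * F x \<partial>std_normal) \<partial>gauss I)"
    using product_integral_insert[OF assms(1,2,5)] by simp
  then show ?thesis
    by (simp add: std_normal_mgf)
qed

section \<open>The two Gaussian processes\<close>

definition index_tuples :: "nat \<Rightarrow> (nat \<Rightarrow> 'n) set" where
  "index_tuples p = PiE {..<p} (\<lambda>_. UNIV)"

definition tensor_form :: "nat \<Rightarrow> ((nat \<Rightarrow> 'n) \<Rightarrow> real) \<Rightarrow> real ^ 'n \<Rightarrow> real" where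
  "tensor_form p A x = (\<Sum>\<iota>\<in>index_tuples p. A \<iota> * (\<Prod>k<p. x $ \<iota> k))"

definition linear_form :: "('n \<Rightarrow> real) \<Rightarrow> real ^ 'n \<Rightarrow> real" where
  "linear_form g x = (\<Sum>i\<in>UNIV. g i * x $ i)"

text \<open>One probability space carries all the noise: coordinate \<open>Inl None\<close> is an extra standard
  Gaussian \<open>g\<^sub>0\<close>, coordinates \<open>Inl (Some \<iota>)\<close> the tensor entries \<open>A \<iota>\<close>, and coordinates
  \<open>Inr i\<close> the vector entries \<open>g i\<close>. The lower process is \<open>sqrt (p - 1) * g\<^sub>0 + tensor_form p A x\<close>,
  the extra term matching its variance \<open>p\<close> with that of the upper process \<open>sqrt p * linear_form g x\<close>.\<close>
definition noise_index :: "nat \<Rightarrow> ((nat \<Rightarrow> 'n) option + 'n) set" where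
  "noise_index p = Inl ` insert None (Some ` index_tuples p) \<union> range Inr"

definition lower_coef :: "nat \<Rightarrow> ('j \<Rightarrow> real ^ 'n) \<Rightarrow> 'j \<Rightarrow> (nat \<Rightarrow> 'n) option + 'n \<Rightarrow> real" where
  "lower_coef p x j w =
     (case w of Inl None \<Rightarrow> sqrt (real p - 1) | Inl (Some \<iota>) \<Rightarrow> (\<Prod>k<p. x j $ \<iota> k) | Inr i \<Rightarrow> 0)"

definition upper_coef :: "nat \<Rightarrow> ('j \<Rightarrow> real ^ 'n) \<Rightarrow> 'j \<Rightarrow> (nat \<Rightarrow> 'n) option + 'n \<Rightarrow> real" where
  "upper_coef p x j w = (case w of Inl _ \<Rightarrow> 0 | Inr i \<Rightarrow> sqrt (real p) * x j $ i)"

lemma finite_index_tuples: "finite (index_tuples p :: (nat \<Rightarrow> 'n::finite) set)"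
  unfolding index_tuples_def by (rule finite_PiE) auto

lemma finite_noise_index: "finite (noise_index p :: ((nat \<Rightarrow> 'n::finite) option + 'n) set)"
  unfolding noise_index_def using finite_index_tuples by auto

lemma sum_noise_index:
  "(\<Sum>w\<in>noise_index p. f w)
    = f (Inl None) + (\<Sum>\<iota>\<in>index_tuples p. f (Inl (Some \<iota>))) + (\<Sum>i\<in>(UNIV :: 'n::finite set). f (Inr i))"
proof -
  have "(\<Sum>w\<in>noise_index p. f w)
      = (\<Sum>w\<in>Inl ` insert None (Some ` index_tuples p). f w) + (\<Sum>w\<in>range Inr. f w)"
    unfolding noise_index_def using finite_index_tuples by (intro sum.union_disjoint) auto
  also have "(\<Sum>w\<in>Inl ` insert None (Some ` index_tuples p). f w) = (\<Sum>v\<in>insert None (Some ` index_tuples p). f (Inl v))"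
    by (subst sum.reindex) (auto simp: inj_on_def)
  also have "\<dots> = f (Inl None) + (\<Sum>v\<in>Some ` index_tuples p. f (Inl v))"
    using finite_index_tuples by (subst sum.insert) auto
  also have "(\<Sum>v\<in>Some ` index_tuples p. f (Inl v)) = (\<Sum>\<iota>\<in>index_tuples p. f (Inl (Some \<iota>)))"
    by (subst sum.reindex) (auto simp: inj_on_def)
  also have "(\<Sum>w\<in>range Inr. f w) = (\<Sum>i\<in>UNIV. f (Inr i))"
    by (subst sum.reindex) (auto simp: inj_on_def)
  finally show ?thesis .
qed

lemma sum_prod_index_tuples:
  fixes f :: "'n::finite \<Rightarrow> real"
  shows "(\<Sum>\<iota>\<in>index_tuples p. \<Prod>k<p. f (\<iota> k)) = (\<Sum>i\<in>UNIV. f i) ^ p"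
  using prod_sum_PiE[of "{..<p}" "\<lambda>_. UNIV :: 'n set" "\<lambda>_ i. f i"] by (simp add: index_tuples_def)

lemma tensor_form_cong:
  "(\<And>\<iota>. \<iota> \<in> index_tuples p \<Longrightarrow> A \<iota> = A' \<iota>) \<Longrightarrow> tensor_form p A x = tensor_form p A' x"
  unfolding tensor_form_def by (rule sum.cong) auto

lemma lincomb_lower_coef:
  "lincomb (noise_index p) (lower_coef p x j) u
    = sqrt (real p - 1) * u (Inl None) + tensor_form p (\<lambda>\<iota>. u (Inl (Some \<iota>))) (x j)"
  unfolding lincomb_def sum_noise_index tensor_form_def lower_coef_def by (simp add: mult_ac)

lemma lincomb_upper_coef:
  "lincomb (noise_index p) (upper_coef p x j) u = sqrt (real p) * linear_form (\<lambda>i. u (Inr i)) (x j)"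
  unfolding lincomb_def sum_noise_index linear_form_def upper_coef_def
  by (simp add: sum_distrib_left mult_ac)

lemma covariance_lower_coef:
  assumes "p > 0"
  shows "(\<Sum>w\<in>noise_index p. lower_coef p x j w * lower_coef p x k w)
    = (real p - 1) + (x j \<bullet> x k) ^ p"
proof -
  have "(\<Sum>\<iota>\<in>index_tuples p. (\<Prod>l<p. x j $ \<iota> l) * (\<Prod>l<p. x k $ \<iota> l)) = (x j \<bullet> x k) ^ p"
    using sum_prod_index_tuples[of "\<lambda>i. x j $ i * x k $ i" p]
    by (simp add: inner_vec_def prod.distrib)
  then show ?thesis
    using assms unfolding sum_noise_index lower_coef_def by simp
qed

lemma covariance_upper_coef:
  "(\<Sum>w\<in>noise_index p. upper_coef p x j w * upper_coef p x k w) = real p * (x j \<bullet> x k)"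
proof -
  have sqrt_sqrt: "sqrt (real p) * (sqrt (real p) * y) = real p * y" for y
    by (simp add: mult.assoc[symmetric])
  show ?thesis
    unfolding sum_noise_index upper_coef_def inner_vec_def by (simp add: sum_distrib_left mult_ac sqrt_sqrt)
qed

lemma mult_le_pred_add_power_even:
  fixes t :: real
  assumes "even p" "p > 0"
  shows "real p * t \<le> (real p - 1) + t ^ p"
proof (cases "t \<ge> 0")
  case True
  have "1 + real p * (t - 1) \<le> (1 + (t - 1)) ^ p"
    by (rule Bernoulli_inequality) (use True in simp)
  then show ?thesis by (simp add: algebra_simps)
next
  case False
  have "0 \<le> t ^ p" using assms(1) by (simp add: zero_le_even_power)
  moreover have "real p * t \<le> 0" using False by (simp add: mult_nonneg_nonpos)
  ultimately show ?thesis using assms(2) by linarith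
qed

lemma gaussian_pair_lower_upper:
  fixes x :: "'j \<Rightarrow> real ^ 'n::finite"
  assumes "p > 0" "even p" "finite J" "J \<noteq> {}" "\<And>j. j \<in> J \<Longrightarrow> x j \<in> sphere 0 1"
  shows "gaussian_pair (noise_index p :: ((nat \<Rightarrow> 'n) option + 'n) set) J (lower_coef p x) (upper_coef p x)"
proof
  show "finite (noise_index p :: ((nat \<Rightarrow> 'n) option + 'n) set)" by (rule finite_noise_index)
  fix j k assume j: "j \<in> J" and k: "k \<in> J"
  show "(\<Sum>w\<in>noise_index p. lower_coef p x j w * upper_coef p x k w) = 0"
    unfolding sum_noise_index lower_coef_def upper_coef_def by simp
  have "x j \<bullet> x j = 1"
    using assms(5)[OF j] by (simp add: norm_eq_1[symmetric])
  then show "(\<Sum>w\<in>noise_index p. lower_coef p x j w * lower_coef p x j w)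
      = (\<Sum>w\<in>noise_index p. upper_coef p x j w * upper_coef p x j w)"
    unfolding covariance_lower_coef[OF assms(1)] covariance_upper_coef by simp
  show "(\<Sum>w\<in>noise_index p. upper_coef p x j w * upper_coef p x k w)
      \<le> (\<Sum>w\<in>noise_index p. lower_coef p x j w * lower_coef p x k w)"
    unfolding covariance_lower_coef[OF assms(1)] covariance_upper_coef
    by (rule mult_le_pred_add_power_even[OF assms(2,1)])
qed (use assms in auto)

lemma measurable_tensor_form [measurable]:
  "(\<lambda>A. tensor_form p A x) \<in> borel_measurable (gauss (index_tuples p :: (nat \<Rightarrow> 'n::finite) set))"
  unfolding tensor_form_def by measurable

lemma measurable_linear_form [measurable]:
  "(\<lambda>g. linear_form g x) \<in> borel_measurable (gauss (UNIV :: 'n::finite set))"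
  unfolding linear_form_def by measurable

lemma exp_Max_lincomb_lower_coef:
  assumes "finite J" "J \<noteq> {}"
  shows "exp (c * Max ((\<lambda>j. lincomb (noise_index p) (lower_coef p x j) u) ` J))
    = exp (c * sqrt (real p - 1) * u (Inl None))
        * exp (c * Max ((\<lambda>j. tensor_form p (\<lambda>\<iota>. u (Inl (Some \<iota>))) (x j)) ` J))"
proof -
  have "Max ((\<lambda>j. sqrt (real p - 1) * u (Inl None) + tensor_form p (\<lambda>\<iota>. u (Inl (Some \<iota>))) (x j)) ` J)
      = sqrt (real p - 1) * u (Inl None) + Max ((\<lambda>j. tensor_form p (\<lambda>\<iota>. u (Inl (Some \<iota>))) (x j)) ` J)"
    using Max_add_commute[OF assms] by (simp add: add.commute)
  then show ?thesis
    unfolding lincomb_lower_coef by (simp add: distrib_left exp_add mult_ac)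
qed

lemma integral_exp_Max_lower:
  fixes x :: "'j \<Rightarrow> real ^ 'n::finite"
  assumes "p > 0" "even p" "finite J" "J \<noteq> {}" "\<And>j. j \<in> J \<Longrightarrow> x j \<in> sphere 0 1" "0 \<le> c"
  shows "(\<integral>u. exp (c * Max ((\<lambda>j. lincomb (noise_index p) (lower_coef p x j) u) ` J)) \<partial>gauss (noise_index p))
    = exp (c\<^sup>2 * (real p - 1) / 2)
        * (\<integral>A. exp (c * Max ((\<lambda>j. tensor_form p A (x j)) ` J)) \<partial>gauss (index_tuples p :: (nat \<Rightarrow> 'n) set))"
proof -
  interpret gaussian_pair "noise_index p :: ((nat \<Rightarrow> 'n) option + 'n) set" J "lower_coef p x" "upper_coef p x"
    by (rule gaussian_pair_lower_upper[OF assms(1-5)])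
  let ?I = "Some ` index_tuples p :: (nat \<Rightarrow> 'n) option set"
  define H where "H = (\<lambda>A. exp (c * Max ((\<lambda>j. tensor_form p A (x j)) ` J)))"
  define G where "G = (\<lambda>v. exp (c * sqrt (real p - 1) * v None) * H (\<lambda>\<iota>. v (Some \<iota>)))"
  have H_meas [measurable]: "H \<in> borel_measurable (gauss (index_tuples p))"
    unfolding H_def using finite_J by measurable
  have H_local: "H A = H A'" if "\<And>\<iota>. \<iota> \<in> index_tuples p \<Longrightarrow> A \<iota> = A' \<iota>" for A A'
    unfolding H_def using that by (simp cong: tensor_form_cong)
  have "inj_on Some (index_tuples p)"
    by (simp add: inj_on_def)
  note H_Some = integral_gauss_image[OF this H_meas H_local]
  have G_meas [measurable]: "G \<in> borel_measurable (gauss (insert None ?I))"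
  proof -
    have "(\<lambda>v. tensor_form p (\<lambda>\<iota>. v (Some \<iota>)) y) \<in> borel_measurable (gauss (insert None ?I))" for y
      unfolding tensor_form_def by (intro borel_measurable_sum) measurable
    then show ?thesis
      unfolding G_def H_def using finite_J by measurable
  qed
  have inj: "inj_on Inl (insert None ?I)" "Inl \<in> insert None ?I \<rightarrow> noise_index p"
    by (auto simp: noise_index_def)
  have G_Inl: "G (\<lambda>n\<in>insert None ?I. u (Inl n))
      = exp (c * Max ((\<lambda>j. lincomb (noise_index p) (lower_coef p x j) u) ` J))" for u
    using H_local[of "\<lambda>\<iota>. (\<lambda>n\<in>insert None ?I. u (Inl n)) (Some \<iota>)" "\<lambda>\<iota>. u (Inl (Some \<iota>))"]
    by (simp add: G_def H_def exp_Max_lincomb_lower_coef[OF finite_J J_nonempty])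
  have "(\<integral>u. exp (c * Max ((\<lambda>j. lincomb (noise_index p) (lower_coef p x j) u) ` J)) \<partial>gauss (noise_index p))
      = integral\<^sup>L (gauss (insert None ?I)) G"
    using integral_gauss_reindex[OF inj] G_Inl by simp
  also have "\<dots> = exp ((c * sqrt (real p - 1))\<^sup>2 / 2) * (\<integral>v. H (\<lambda>\<iota>. v (Some \<iota>)) \<partial>gauss ?I)"
    unfolding G_def
  proof (rule integral_gauss_insert_exp_mult)
    have "integrable (gauss (insert None ?I)) G"
      using integrable_gauss_reindex[OF inj G_meas] G_Inl integrable_exp_Max_interp[OF assms(6), of 0]
      by (simp add: interp_0)
    then show "integrable (gauss (insert None ?I)) (\<lambda>v. exp (c * sqrt (real p - 1) * v None) * H (\<lambda>\<iota>. v (Some \<iota>)))"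
      by (simp add: G_def)
  next
    show "finite ?I" "None \<notin> ?I"
      using finite_index_tuples by auto
    show "(\<lambda>v. H (\<lambda>\<iota>. v (Some \<iota>))) \<in> borel_measurable (gauss ?I)"
      by (rule H_Some(1))
    show "H (\<lambda>\<iota>. v (Some \<iota>)) = H (\<lambda>\<iota>. v' (Some \<iota>))" if "\<And>n. n \<in> ?I \<Longrightarrow> v n = v' n" for v v'
      using that by (intro H_local) auto
  qed
  finally show ?thesis
    using assms(1) H_Some(2) by (simp add: H_def power_mult_distrib)
qed

lemma integral_exp_Max_upper:
  fixes x :: "'j \<Rightarrow> real ^ 'n::finite"
  assumes "finite J" "J \<noteq> {}" "0 \<le> c"
  shows "(\<integral>u. exp (c * Max ((\<lambda>j. lincomb (noise_index p) (upper_coef p x j) u) ` J)) \<partial>gauss (noise_index p))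
    = (\<integral>g. exp (c * sqrt (real p) * Max ((\<lambda>j. linear_form g (x j)) ` J)) \<partial>gauss (UNIV :: 'n set))"
proof -
  have Max_scale: "Max ((\<lambda>j. sqrt (real p) * linear_form g (x j)) ` J)
      = sqrt (real p) * Max ((\<lambda>j. linear_form g (x j)) ` J)" for g
    using mono_Max_commute[of "\<lambda>t. sqrt (real p) * t" "(\<lambda>j. linear_form g (x j)) ` J"] assms(1,2)
    by (simp add: monoI mult_left_mono image_image)
  define F where "F = (\<lambda>g. exp (c * sqrt (real p) * Max ((\<lambda>j. linear_form g (x j)) ` J)))"
  have "Inr \<in> UNIV \<rightarrow> noise_index p"
    by (auto simp: noise_index_def)
  moreover have "F \<in> borel_measurable (gauss UNIV)"
    unfolding F_def using assms(1) by measurable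
  ultimately have "integral\<^sup>L (gauss UNIV) F = (\<integral>u. F (\<lambda>n\<in>UNIV. u (Inr n)) \<partial>gauss (noise_index p))"
    by (intro integral_gauss_reindex) (simp_all add: inj_on_def)
  then show ?thesis
    by (simp add: F_def restrict_UNIV lincomb_upper_coef Max_scale mult.assoc)
qed

lemma exp_Max_tensor_form_le:
  fixes x :: "'j \<Rightarrow> real ^ 'n::finite"
  assumes "p > 0" "even p" "finite J" "J \<noteq> {}" "\<And>j. j \<in> J \<Longrightarrow> x j \<in> sphere 0 1" "0 < c"
  shows "exp (c\<^sup>2 * (real p - 1) / 2)
      * (\<integral>A. exp (c * Max ((\<lambda>j. tensor_form p A (x j)) ` J)) \<partial>gauss (index_tuples p :: (nat \<Rightarrow> 'n) set))
    \<le> (\<integral>g. exp (c * sqrt (real p) * Max ((\<lambda>j. linear_form g (x j)) ` J)) \<partial>gauss (UNIV :: 'n set))"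
proof -
  interpret gaussian_pair "noise_index p :: ((nat \<Rightarrow> 'n) option + 'n) set" J "lower_coef p x" "upper_coef p x"
    by (rule gaussian_pair_lower_upper[OF assms(1-5)])
  show ?thesis
    using integral_exp_Max_le[OF assms(6)] assms
    by (simp add: integral_exp_Max_lower integral_exp_Max_upper)
qed

section \<open>From finite maxima to the supremum over \<open>S\<close>\<close>

lemma dense_sequence:
  fixes S :: "'a::{metric_space, second_countable_topology} set"
  assumes "S \<noteq> {}"
  obtains d :: "nat \<Rightarrow> 'a" where "range d \<subseteq> S" "S \<subseteq> closure (range d)"
proof -
  obtain T where T: "countable T" "T \<subseteq> S" "S \<subseteq> closure T"
    by (rule separable)
  then have "T \<noteq> {}"
    using assms by auto
  then show ?thesis
    using T range_from_nat_into[of T] by (intro that[of "from_nat_into T"]) auto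
qed

lemma tendsto_Max_dense_SUP:
  fixes f :: "'b::topological_space \<Rightarrow> real"
  assumes "continuous_on UNIV f" "range d \<subseteq> S" "S \<subseteq> closure (range d)" "bdd_above (f ` S)"
  shows "(\<lambda>k. Max ((\<lambda>j. f (d j)) ` {..k})) \<longlonglongrightarrow> (SUP x\<in>S. f x)"
proof (rule metric_LIMSEQ_I)
  fix e :: real assume "0 < e"
  let ?L = "SUP x\<in>S. f x"
  have "S \<noteq> {}" using assms(2) by auto
  have upper: "Max ((\<lambda>j. f (d j)) ` {..k}) \<le> ?L" for k
    using assms(2) by (auto intro!: cSUP_upper assms(4))
  obtain x where x: "x \<in> S" "?L - e < f x"
    using less_cSUP_iff[OF \<open>S \<noteq> {}\<close> assms(4), of "?L - e"] \<open>0 < e\<close> by auto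
  have "open {y. ?L - e < f y}"
    using assms(1) by (intro open_Collect_less continuous_on_const)
  moreover have "x \<in> closure (range d)"
    using x assms(3) by auto
  ultimately have "{y. ?L - e < f y} \<inter> range d \<noteq> {}"
    using x unfolding closure_iff_nhds_not_empty by blast
  then obtain j0 where j0: "?L - e < f (d j0)"
    by auto
  show "\<exists>k0. \<forall>k\<ge>k0. dist (Max ((\<lambda>j. f (d j)) ` {..k})) ?L < e"
  proof (intro exI allI impI)
    fix k assume "j0 \<le> k"
    then have "f (d j0) \<le> Max ((\<lambda>j. f (d j)) ` {..k})"
      by (intro Max_ge) auto
    then show "dist (Max ((\<lambda>j. f (d j)) ` {..k})) ?L < e"
      using upper[of k] j0 unfolding dist_real_def by linarith
  qed
qed

lemma tendsto_integral_exp_Max_dense: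
  fixes F :: "'a \<Rightarrow> 'b::topological_space \<Rightarrow> real"
  assumes dense: "range d \<subseteq> S" "S \<subseteq> closure (range d)" and "0 \<le> c"
    and cont: "\<And>\<omega>. continuous_on UNIV (F \<omega>)"
    and [measurable]: "\<And>x. (\<lambda>\<omega>. F \<omega> x) \<in> borel_measurable M"
    and bound: "\<And>\<omega> x. x \<in> S \<Longrightarrow> F \<omega> x \<le> B \<omega>"
    and integrable: "integrable M (\<lambda>\<omega>. exp (c * B \<omega>))"
  shows "integrable M (\<lambda>\<omega>. exp (c * (SUP x\<in>S. F \<omega> x)))"
    and "(\<lambda>k. \<integral>\<omega>. exp (c * Max ((\<lambda>j. F \<omega> (d j)) ` {..k})) \<partial>M)
           \<longlonglongrightarrow> (\<integral>\<omega>. exp (c * (SUP x\<in>S. F \<omega> x)) \<partial>M)"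
proof -
  have "S \<noteq> {}" using dense by auto
  have bdd: "bdd_above (F \<omega> ` S)" for \<omega>
    by (intro bdd_aboveI[where M = "B \<omega>"]) (auto simp: bound)
  have lim: "(\<lambda>k. exp (c * Max ((\<lambda>j. F \<omega> (d j)) ` {..k}))) \<longlonglongrightarrow> exp (c * (SUP x\<in>S. F \<omega> x))" for \<omega>
    by (intro tendsto_intros tendsto_Max_dense_SUP[OF cont dense bdd])
  have meas_Max [measurable]: "(\<lambda>\<omega>. exp (c * Max ((\<lambda>j. F \<omega> (d j)) ` {..k}))) \<in> borel_measurable M" for k
    by measurable
  have meas_SUP [measurable]: "(\<lambda>\<omega>. exp (c * (SUP x\<in>S. F \<omega> x))) \<in> borel_measurable M"
    by (rule borel_measurable_LIMSEQ_real[OF lim]) measurable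
  have "d j \<in> S" for j
    using dense(1) by auto
  then have "Max ((\<lambda>j. F \<omega> (d j)) ` {..k}) \<le> B \<omega>" for \<omega> k
    by (simp add: bound)
  then have Max_le: "norm (exp (c * Max ((\<lambda>j. F \<omega> (d j)) ` {..k}))) \<le> exp (c * B \<omega>)" for \<omega> k
    using \<open>0 \<le> c\<close> by (simp add: mult_left_mono)
  have "(SUP x\<in>S. F \<omega> x) \<le> B \<omega>" for \<omega>
    using \<open>S \<noteq> {}\<close> bound by (rule cSUP_least)
  then have SUP_le: "norm (exp (c * (SUP x\<in>S. F \<omega> x))) \<le> norm (exp (c * B \<omega>))" for \<omega>
    using \<open>0 \<le> c\<close> by (simp add: mult_left_mono)
  show "integrable M (\<lambda>\<omega>. exp (c * (SUP x\<in>S. F \<omega> x)))"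
    by (rule Bochner_Integration.integrable_bound[OF integrable meas_SUP]) (intro AE_I2 SUP_le)
  show "(\<lambda>k. \<integral>\<omega>. exp (c * Max ((\<lambda>j. F \<omega> (d j)) ` {..k})) \<partial>M)
      \<longlonglongrightarrow> (\<integral>\<omega>. exp (c * (SUP x\<in>S. F \<omega> x)) \<partial>M)"
  proof (rule integral_dominated_convergence[OF _ _ integrable])
    show "AE \<omega> in M. (\<lambda>k. exp (c * Max ((\<lambda>j. F \<omega> (d j)) ` {..k}))) \<longlonglongrightarrow> exp (c * (SUP x\<in>S. F \<omega> x))"
      by (intro AE_I2 lim)
    show "AE \<omega> in M. norm (exp (c * Max ((\<lambda>j. F \<omega> (d j)) ` {..k}))) \<le> exp (c * B \<omega>)" for k
      by (intro AE_I2 Max_le)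
  qed (fact meas_SUP meas_Max)+
qed

lemma abs_component_le_1: "x \<in> sphere (0 :: real ^ 'n::finite) 1 \<Longrightarrow> \<bar>x $ i\<bar> \<le> 1"
  using component_le_norm_cart[of x i] by simp

lemma abs_tensor_form_le:
  assumes "x \<in> sphere 0 1"
  shows "\<bar>tensor_form p A x\<bar> \<le> (\<Sum>\<iota>\<in>index_tuples p. \<bar>A \<iota>\<bar>)"
proof -
  have "\<bar>tensor_form p A x\<bar> \<le> (\<Sum>\<iota>\<in>index_tuples p. \<bar>A \<iota>\<bar> * (\<Prod>k<p. \<bar>x $ \<iota> k\<bar>))"
    unfolding tensor_form_def by (rule order_trans[OF sum_abs]) (simp add: abs_mult abs_prod)
  also have "\<dots> \<le> (\<Sum>\<iota>\<in>index_tuples p. \<bar>A \<iota>\<bar> * 1)"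
    using assms by (intro sum_mono mult_left_mono prod_le_1) (auto intro: abs_component_le_1)
  finally show ?thesis by simp
qed

lemma abs_linear_form_le:
  assumes "x \<in> sphere 0 1"
  shows "\<bar>linear_form g x\<bar> \<le> (\<Sum>i\<in>UNIV. \<bar>g i\<bar>)"
proof -
  have "\<bar>linear_form g x\<bar> \<le> (\<Sum>i\<in>UNIV. \<bar>g i\<bar> * \<bar>x $ i\<bar>)"
    unfolding linear_form_def by (rule order_trans[OF sum_abs]) (simp add: abs_mult)
  also have "\<dots> \<le> (\<Sum>i\<in>UNIV. \<bar>g i\<bar> * 1)"
    using assms by (intro sum_mono mult_left_mono) (auto intro: abs_component_le_1)
  finally show ?thesis by simp
qed

lemma (in prob_space) integral_exp_pos:
  fixes f :: "'a \<Rightarrow> real"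
  assumes "integrable M (\<lambda>x. exp (f x))"
  shows "0 < (\<integral>x. exp (f x) \<partial>M)"
proof -
  have "(\<integral>x. exp (f x) \<partial>M) \<noteq> 0"
  proof
    assume "(\<integral>x. exp (f x) \<partial>M) = 0"
    then have "AE x in M. exp (f x) = 0"
      using integral_nonneg_eq_0_iff_AE[OF assms] by simp
    then show False
      using AE_False by simp
  qed
  moreover have "0 \<le> (\<integral>x. exp (f x) \<partial>M)"
    by (rule integral_nonneg_AE) simp
  ultimately show ?thesis
    by (simp add: less_le)
qed

lemma exp_SUP_tensor_form_le:
  fixes S :: "(real ^ 'n::finite) set"
  assumes "p > 0" "even p" "S \<subseteq> sphere 0 1" "S \<noteq> {}" "0 < c"
  defines "L \<equiv> \<integral>A. exp (c * (SUP x\<in>S. tensor_form p A x)) \<partial>gauss (index_tuples p :: (nat \<Rightarrow> 'n) set)"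
    and "U \<equiv> \<integral>g. exp (c * sqrt (real p) * (SUP x\<in>S. linear_form g x)) \<partial>gauss (UNIV :: 'n set)"
  shows "0 < L" and "exp (c\<^sup>2 * (real p - 1) / 2) * L \<le> U"
proof -
  obtain d :: "nat \<Rightarrow> real ^ 'n" where dense: "range d \<subseteq> S" "S \<subseteq> closure (range d)"
    by (rule dense_sequence[OF assms(4)])
  have d_sphere: "d j \<in> sphere 0 1" for j
    using dense(1) assms(3) by blast
  have bound_tensor: "tensor_form p A x \<le> (\<Sum>\<iota>\<in>index_tuples p. \<bar>A \<iota>\<bar>)" if "x \<in> S" for A x
    using that assms(3) abs_tensor_form_le[of x p A] by (auto simp: abs_le_iff)
  have bound_linear: "linear_form g x \<le> (\<Sum>i\<in>UNIV. \<bar>g i\<bar>)" if "x \<in> S" for g x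
    using that assms(3) abs_linear_form_le[of x g] by (auto simp: abs_le_iff)
  have cont: "continuous_on UNIV (tensor_form p A)" "continuous_on UNIV (linear_form g)" for A g
    unfolding tensor_form_def linear_form_def by (intro continuous_intros)+
  have lower: "integrable (gauss (index_tuples p)) (\<lambda>A. exp (c * (SUP x\<in>S. tensor_form p A x)))"
    "(\<lambda>k. \<integral>A. exp (c * Max ((\<lambda>j. tensor_form p A (d j)) ` {..k})) \<partial>gauss (index_tuples p)) \<longlonglongrightarrow> L"
    unfolding L_def using assms(5)
    by (intro tendsto_integral_exp_Max_dense[OF dense _ cont(1) _ bound_tensor]
        integrable_gauss_exp_sum_abs finite_index_tuples; simp)+
  have upper: "(\<lambda>k. \<integral>g. exp (c * sqrt (real p) * Max ((\<lambda>j. linear_form g (d j)) ` {..k})) \<partial>gauss UNIV)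
      \<longlonglongrightarrow> U"
    unfolding U_def using assms(5)
    by (intro tendsto_integral_exp_Max_dense[OF dense _ cont(2) _ bound_linear]
        integrable_gauss_exp_sum_abs; simp)
  interpret gauss_tuples: prob_space "gauss (index_tuples p :: (nat \<Rightarrow> 'n) set)"
    by (rule prob_space_gauss)
  show "0 < L"
    unfolding L_def by (rule gauss_tuples.integral_exp_pos[OF lower(1)])
  have "exp (c\<^sup>2 * (real p - 1) / 2)
      * (\<integral>A. exp (c * Max ((\<lambda>j. tensor_form p A (d j)) ` {..k})) \<partial>gauss (index_tuples p :: (nat \<Rightarrow> 'n) set))
    \<le> (\<integral>g. exp (c * sqrt (real p) * Max ((\<lambda>j. linear_form g (d j)) ` {..k})) \<partial>gauss (UNIV :: 'n set))" for k
    using assms(1,2,5) d_sphere by (intro exp_Max_tensor_form_le) auto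
  then show "exp (c\<^sup>2 * (real p - 1) / 2) * L \<le> U"
    by (intro LIMSEQ_le[OF tendsto_mult_left[OF lower(2)] upper]) auto
qed

lemma ln_add_le_of_exp_mult_le:
  fixes a x y :: real
  assumes "0 < x" "exp a * x \<le> y"
  shows "ln x + a \<le> ln y"
proof -
  have "0 < exp a * x"
    using assms(1) by simp
  then have "ln (exp a * x) \<le> ln y"
    using assms(2) by (subst ln_le_cancel_iff) auto
  then show ?thesis
    using assms(1) by (simp add: ln_mult)
qed

theorem corollary2:
  fixes p :: nat and S :: "(real ^ 'n::finite) set" and c3 :: real
  assumes "p > 0" and "even p"
    and "S \<subseteq> sphere 0 1" and "S \<noteq> {}"
    and "c3 > 0"
  shows "xi_l0 p S c3 \<le> xi_u0 p S c3"
proof -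
  let ?L = "\<integral>A. exp (c3 * (SUP x\<in>S. tensor_form p A x)) \<partial>gauss (index_tuples p :: (nat \<Rightarrow> 'n) set)"
  let ?U = "\<integral>g. exp (c3 * sqrt (real p) * (SUP x\<in>S. linear_form g x)) \<partial>gauss (UNIV :: 'n set)"
  have "ln ?L + c3\<^sup>2 * (real p - 1) / 2 \<le> ln ?U"
    using exp_SUP_tensor_form_le[OF assms] by (intro ln_add_le_of_exp_mult_le) simp_all
  then have "(1 / c3) * ln ?L \<le> (1 / c3) * (ln ?U - c3\<^sup>2 * (real p - 1) / 2)"
    using assms(5) by (intro mult_left_mono) auto
  also have "\<dots> = - (c3 / 2) * (real p - 1) + (1 / c3) * ln ?U"
    using assms(5) by (simp add: field_simps power2_eq_square)
  finally show ?thesis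
    unfolding xi_l0_def xi_u0_def tensor_form_def linear_form_def index_tuples_def
    by (intro mult_left_mono) auto
qed

end
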